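(* Suppose that $j$ satisfies the following: (i) $j$ is $C^1$ on $U$, each derivative $Dj(\phi)$ extends to a linear map $D_ej(\phi):C([-h,0],\mathbb{R}^2)\to\mathbb{R}$ and $(\phi,\chi)\mapsto D_ej(\phi)\chi$ is continuous on $U\times C([-h,0],\mathbb{R}^2)$; (ii) for every bounded $B\subset U_+$ there is $L_B\ge 0$ with $|j(\phi)-j(\chi)|\le L_B\|\phi-\chi\|_0$ for all $\phi,\chi\in B$; (iii) $j\ge0$ on $U_+$; (iv) $j(B_1\times B_2)$ is bounded whenever $B_1\times B_2\subset U_+$ and $B_1$ is bounded. Suppose that $q$ is bounded and $C^1$, that $$\forall\,\varepsilon>0\;\exists\,\delta>0\ \text{such that}\ j(\varphi,\psi)\le\varepsilon\ \ \forall\,(\varphi,\psi)\in U_+\ \text{with}\ \|\varphi\|_0\le\delta ,$$ that $q(0)>0$, that there exist $\delta>0$ and $z^*\ge0$ with $q(z)\le-\delta$ for all $z\ge z^*$, and that for every $K>0$ there is $L=L(K)$ with $j(\varphi,\psi)\ge K$ whenever $(\varphi,\psi)\in U_+$ and $\min\varphi\ge L$. Define $\rho_1(\varphi,\psi)=\varphi(0)$ and $\rho_m(\varphi,\psi)=\min\{\varphi(0),\psi(0)\}$. Then the semiflow $S_+$ associated to $w'(t)=q(v(t))w(t)$, $v'(t)=j(w_t,v_t)-\mu v(t)$ on $X_+$ is uniformly $\rho$-persistent for both $\rho=\rho_1$ and $\rho=\rho_m$ (i.e. there is $\varepsilon>0$ with $\liminf_{t\to\infty}\rho(S_+(t,y))>\varepsilon$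 whenever $y\in X_+$, $\rho(y)>0$). In addition, there is a nonempty compact set $B\subset X_+$ with $d(S_+(t,x),B)\to0$ as $t\to\infty$ for all $x\in X_+$, and $S_+$ is point dissipative. Finally, there exists at least one pair of functions with positive constant values satisfying $F(\varphi,\psi)=0$, and any positive zero of $q$ corresponds to one such pair.
   Context: Let $h>0$, $R_-<0$, $I=(R_-,\infty)$, $q:I\to\mathbb{R}$, $\mu>0$, $U=C^1([-h,0],\mathbb{R})\times C^1([-h,0],I)$, $j:U\to\mathbb{R}$, $U_+=C^1([-h,0],\mathbb{R}_+^2)$, $\|\cdot\|_0$ the sup-norm and $\|\phi\|_1=\|\phi\|_0+\|\phi'\|_0$ (the metric $d$ on $X_+$ is induced by $\|\cdot\|_1$); $x_t(s)=x(t+s)$, $s\in[-h,0]$. Define $F(\varphi,\psi)=(q(\psi(0))\varphi(0),\,j(\varphi,\psi)-\mu\psi(0))$ and $X_+=\{\phi\in C^1([-h,0],\mathbb{R}_+^2):\phi'(0)=F(\phi)\}$. Under these assumptions solutions exist globally on $X_+$ and define a continuous semiflow $S_+(t,\phi)=(w,v)^\phi_t$ on $\mathbb{R}_+\times X_+$. Point dissipative means there is a bounded set attracting every point of $X_+$. *)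

theory Defs
  imports "HOL-Analysis.Analysis"
begin

text \<open>States are pairs (phi, psi) of real functions; only their values on [-h,0] matter.\<close>
type_synonym st = "(real \<Rightarrow> real) \<times> (real \<Rightarrow> real)"

definition padd :: "st \<Rightarrow> st \<Rightarrow> st" where
  "padd x y = ((\<lambda>s. fst x s + fst y s), (\<lambda>s. snd x s + snd y s))"

definition psub :: "st \<Rightarrow> st \<Rightarrow> st" where
  "psub x y = ((\<lambda>s. fst x s - fst y s), (\<lambda>s. snd x s - snd y s))"

definition pscale :: "real \<Rightarrow> st \<Rightarrow> st" where
  "pscale c x = ((\<lambda>s. c * fst x s), (\<lambda>s. c * snd x s))"

definition der :: "real \<Rightarrow> (real \<Rightarrow> real) \<Rightarrow> real \<Rightarrow> real" where
  "der h f s = (THE d. (f has_real_derivative d) (at s within {-h..0}))"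

definition C1s :: "real \<Rightarrow> (real \<Rightarrow> real) \<Rightarrow> bool" where
  "C1s h f \<longleftrightarrow> (\<exists>f'. (\<forall>s\<in>{-h..0}. (f has_real_derivative f' s) (at s within {-h..0}))
                    \<and> continuous_on {-h..0} f')"

definition Cont :: "real \<Rightarrow> st \<Rightarrow> bool" where
  "Cont h x \<longleftrightarrow> continuous_on {-h..0} (fst x) \<and> continuous_on {-h..0} (snd x)"

definition norm0s :: "real \<Rightarrow> (real \<Rightarrow> real) \<Rightarrow> real" where
  "norm0s h f = (SUP s\<in>{-h..0}. \<bar>f s\<bar>)"

definition norm1s :: "real \<Rightarrow> (real \<Rightarrow> real) \<Rightarrow> real" where
  "norm1s h f = norm0s h f + norm0s h (der h f)"

definition norm0 :: "real \<Rightarrow> st \<Rightarrow> real" where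
  "norm0 h x = max (norm0s h (fst x)) (norm0s h (snd x))"

definition norm1 :: "real \<Rightarrow> st \<Rightarrow> real" where
  "norm1 h x = norm0 h x + norm0 h (der h (fst x), der h (snd x))"

definition d1 :: "real \<Rightarrow> st \<Rightarrow> st \<Rightarrow> real" where
  "d1 h x y = norm1 h (psub x y)"

definition bounded1s :: "real \<Rightarrow> (real \<Rightarrow> real) set \<Rightarrow> bool" where
  "bounded1s h B \<longleftrightarrow> (\<exists>M. \<forall>f\<in>B. norm1s h f \<le> M)"

definition bounded1 :: "real \<Rightarrow> st set \<Rightarrow> bool" where
  "bounded1 h B \<longleftrightarrow> (\<exists>M. \<forall>x\<in>B. norm1 h x \<le> M)"

definition Uset :: "real \<Rightarrow> real \<Rightarrow> st set" where
  "Uset h Rm = {x. C1s h (fst x) \<and> C1s h (snd x) \<and> (\<forall>s\<in>{-h..0}. snd x s > Rm)}"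

definition Uplus :: "real \<Rightarrow> st set" where
  "Uplus h = {x. C1s h (fst x) \<and> C1s h (snd x) \<and> (\<forall>s\<in>{-h..0}. fst x s \<ge> 0 \<and> snd x s \<ge> 0)}"

definition Fmap :: "(real \<Rightarrow> real) \<Rightarrow> (st \<Rightarrow> real) \<Rightarrow> real \<Rightarrow> st \<Rightarrow> real \<times> real" where
  "Fmap q j \<mu> x = (q (snd x 0) * fst x 0, j x - \<mu> * snd x 0)"

definition Xplus :: "real \<Rightarrow> (real \<Rightarrow> real) \<Rightarrow> (st \<Rightarrow> real) \<Rightarrow> real \<Rightarrow> st set" where
  "Xplus h q j \<mu> = {x \<in> Uplus h. (der h (fst x) 0, der h (snd x) 0) = Fmap q j \<mu> x}"

definition seg :: "(real \<Rightarrow> real) \<Rightarrow> real \<Rightarrow> real \<Rightarrow> real" where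
  "seg x t = (\<lambda>s. x (t + s))"

definition C1_from :: "real \<Rightarrow> (real \<Rightarrow> real) \<Rightarrow> bool" where
  "C1_from h f \<longleftrightarrow> (\<exists>f'. (\<forall>t\<ge>-h. (f has_real_derivative f' t) (at t within {-h..}))
                      \<and> continuous_on {-h..} f')"

definition is_sol :: "real \<Rightarrow> real \<Rightarrow> (real \<Rightarrow> real) \<Rightarrow> (st \<Rightarrow> real) \<Rightarrow> real \<Rightarrow> st
    \<Rightarrow> (real \<Rightarrow> real) \<Rightarrow> (real \<Rightarrow> real) \<Rightarrow> bool" where
  "is_sol h Rm q j \<mu> x w v \<longleftrightarrow>
     C1_from h w \<and> C1_from h v \<and> (\<forall>t\<ge>-h. v t > Rm) \<and>
     (\<forall>s\<in>{-h..0}. w s = fst x s \<and> v s = snd x s) \<and>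
     (\<forall>t\<ge>0. (w has_real_derivative q (v t) * w t) (at t within {-h..}) \<and>
             (v has_real_derivative j (seg w t, seg v t) - \<mu> * v t) (at t within {-h..}))"

definition Sflow :: "(st \<Rightarrow> st) \<Rightarrow> real \<Rightarrow> st \<Rightarrow> st" where
  "Sflow sol t x = (seg (fst (sol x)) t, seg (snd (sol x)) t)"

definition setdist1 :: "real \<Rightarrow> st \<Rightarrow> st set \<Rightarrow> real" where
  "setdist1 h x B = (INF b\<in>B. d1 h x b)"

definition compact1 :: "real \<Rightarrow> st set \<Rightarrow> bool" where
  "compact1 h B \<longleftrightarrow> (\<forall>f::nat \<Rightarrow> st. (\<forall>n. f n \<in> B) \<longrightarrow>
       (\<exists>l\<in>B. \<exists>r. strict_mono r \<and> (\<lambda>n. d1 h (f (r n)) l) \<longlonglongrightarrow> 0))"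

definition unif_persistent :: "st set \<Rightarrow> (real \<Rightarrow> st \<Rightarrow> st) \<Rightarrow> (st \<Rightarrow> real) \<Rightarrow> bool" where
  "unif_persistent X S \<rho> \<longleftrightarrow> (\<exists>\<epsilon>>0. \<forall>y\<in>X. \<rho> y > 0 \<longrightarrow>
       Liminf at_top (\<lambda>t. ereal (\<rho> (S t y))) > ereal \<epsilon>)"

definition point_dissipative :: "real \<Rightarrow> st set \<Rightarrow> (real \<Rightarrow> st \<Rightarrow> st) \<Rightarrow> bool" where
  "point_dissipative h X S \<longleftrightarrow> (\<exists>B. B \<subseteq> X \<and> bounded1 h B \<and>
       (\<forall>x\<in>X. ((\<lambda>t. setdist1 h (S t x) B) \<longlongrightarrow> 0) at_top))"

definition rho1 :: "st \<Rightarrow> real" where "rho1 x = fst x 0"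
definition rhom :: "st \<Rightarrow> real" where "rhom x = min (fst x 0) (snd x 0)"

end

theory Submission
  imports Defs "HOL-Complex_Analysis.Great_Picard"
begin

text \<open>
  The equation \<open>w' = q(v) w\<close> is linear in \<open>w\<close>, so \<open>w(b) = w(a) exp (\<integral>\<^sub>a\<^sup>b q(v))\<close>:
  \<open>w\<close> keeps its sign and grows or decays with the sign of \<open>q(v)\<close>. The component \<open>v\<close> stays
  nonnegative because \<open>j \<ge> 0\<close> on \<open>U\<^sub>+\<close> and, \<open>j\<close> being \<open>C\<^sup>1\<close>, lifting \<open>v\<close> by \<open>c\<close> changes
  \<open>j\<close> only by \<open>O(c)\<close>.

  Dissipativity: while \<open>w\<close> is large, \<open>j\<close> drives \<open>v\<close> above the level beyond which
  \<open>q \<le> -\<delta>\<close>, so \<open>w\<close> decays; hence \<open>w\<close>, then \<open>j\<close>, then \<open>v\<close> are eventually bounded.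
  Persistence: while \<open>w\<close> is small, so is \<open>j\<close>, and \<open>v\<close> falls to where \<open>q \<ge> q(0)/2\<close>, so
  \<open>w\<close> grows; this bounds \<open>w\<close>, and then \<open>v\<close>, away from \<open>0\<close>. Once bounded, the equations
  bound the derivatives of \<open>w\<close> and \<open>v\<close> and make them Lipschitz, so the segments eventually
  lie in a set that is compact in \<open>C\<^sup>1\<close> by Arzela-Ascoli. Equilibria come from the
  intermediate value theorem, applied to \<open>q\<close> and to \<open>a \<mapsto> j(a, z) - \<mu> z\<close>.
\<close>

section \<open>Functions on the delay interval\<close>

lemma der_eqI:
  assumes "h > 0" "s \<in> {-h..0}" "(f has_real_derivative d) (at s within {-h..0})"
  shows "der h f s = d"
proof -
  have "d' = d" if "(f has_real_derivative d') (at s within {-h..0})" for d'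
  proof -
    have "vector_derivative f (at s within cbox (-h) 0) = d'"
      using that assms by (intro vector_derivative_within_cbox)
        (auto simp: has_real_derivative_iff_has_vector_derivative)
    moreover have "vector_derivative f (at s within cbox (-h) 0) = d"
      using assms by (intro vector_derivative_within_cbox)
        (auto simp: has_real_derivative_iff_has_vector_derivative)
    ultimately show ?thesis by simp
  qed
  then show ?thesis unfolding der_def using assms(3) by (rule the_equality[rotated])
qed

lemma C1s_has_der:
  assumes "h > 0" "C1s h f" "s \<in> {-h..0}"
  shows "(f has_real_derivative der h f s) (at s within {-h..0})"
proof -
  obtain f' where "\<forall>s\<in>{-h..0}. (f has_real_derivative f' s) (at s within {-h..0})"
    using assms(2) unfolding C1s_def by blast
  with assms show ?thesis using der_eqI by metis
qed

lemma C1s_continuous_der: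
  assumes "h > 0" "C1s h f"
  shows "continuous_on {-h..0} (der h f)"
proof -
  obtain f' where f': "\<forall>s\<in>{-h..0}. (f has_real_derivative f' s) (at s within {-h..0})"
    "continuous_on {-h..0} f'" using assms(2) unfolding C1s_def by blast
  have "\<forall>s\<in>{-h..0}. der h f s = f' s" using f'(1) der_eqI[OF assms(1)] by blast
  then show ?thesis using continuous_on_cong[of "{-h..0}" "{-h..0}" "der h f" f'] f'(2) by simp
qed

lemma C1s_continuous:
  assumes "h > 0" "C1s h f"
  shows "continuous_on {-h..0} f"
  unfolding continuous_on_eq_continuous_within
  using C1s_has_der[OF assms] DERIV_continuous by blast

lemma C1s_const: "C1s h (\<lambda>s. c)"
  unfolding C1s_def by (intro exI[of _ "\<lambda>s. 0"]) (auto intro!: derivative_eq_intros)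

lemma C1s_add_const:
  assumes "C1s h f"
  shows "C1s h (\<lambda>s. f s + c)"
  using assms unfolding C1s_def by (auto intro!: derivative_eq_intros)

lemma C1s_diff:
  assumes "C1s h f" "C1s h g"
  shows "C1s h (\<lambda>s. f s - g s)"
proof -
  obtain f' g' where
    "\<forall>s\<in>{-h..0}. (f has_real_derivative f' s) (at s within {-h..0})" "continuous_on {-h..0} f'"
    "\<forall>s\<in>{-h..0}. (g has_real_derivative g' s) (at s within {-h..0})" "continuous_on {-h..0} g'"
    using assms unfolding C1s_def by blast
  then show ?thesis unfolding C1s_def
    by (intro exI[of _ "\<lambda>s. f' s - g' s"]) (auto intro!: derivative_eq_intros continuous_intros)
qed

lemma der_const:
  assumes "h > 0" "s \<in> {-h..0}"
  shows "der h (\<lambda>s. c) s = 0"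
  by (rule der_eqI[OF assms]) (auto intro!: derivative_eq_intros)

lemma der_add_const:
  assumes "h > 0" "C1s h f" "s \<in> {-h..0}"
  shows "der h (\<lambda>s. f s + c) s = der h f s"
  using C1s_has_der[OF assms] by (intro der_eqI[OF assms(1,3)]) (auto intro!: derivative_eq_intros)

lemma der_diff:
  assumes "h > 0" "C1s h f" "C1s h g" "s \<in> {-h..0}"
  shows "der h (\<lambda>s. f s - g s) s = der h f s - der h g s"
  using C1s_has_der[OF assms(1,2,4)] C1s_has_der[OF assms(1,3,4)]
  by (intro der_eqI[OF assms(1,4)]) (auto intro!: derivative_eq_intros)

lemma norm0s_le:
  assumes "h \<ge> 0" "\<And>s. s \<in> {-h..0} \<Longrightarrow> \<bar>f s\<bar> \<le> c"
  shows "norm0s h f \<le> c"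
  unfolding norm0s_def using assms by (intro cSUP_least) auto

lemma abs_le_norm0s:
  assumes "continuous_on {-h..0} f" "s \<in> {-h..0}"
  shows "\<bar>f s\<bar> \<le> norm0s h f"
proof -
  have "bounded ((\<lambda>s. \<bar>f s\<bar>) ` {-h..0})"
    by (intro compact_imp_bounded compact_continuous_image continuous_intros assms compact_Icc)
  then show ?thesis unfolding norm0s_def using assms(2)
    by (intro cSUP_upper bounded_imp_bdd_above) auto
qed

lemma norm0s_nonneg:
  assumes "h \<ge> 0" "continuous_on {-h..0} f"
  shows "0 \<le> norm0s h f"
  using abs_le_norm0s[OF assms(2), of 0] assms(1) by fastforce

lemma norm0s_cong: "(\<And>s. s \<in> {-h..0} \<Longrightarrow> f s = g s) \<Longrightarrow> norm0s h f = norm0s h g"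
  unfolding norm0s_def by (rule SUP_cong) auto

lemma norm0s_const: "h \<ge> 0 \<Longrightarrow> norm0s h (\<lambda>s. c) = \<bar>c\<bar>"
  unfolding norm0s_def by simp

lemma norm0s_der_const: "h > 0 \<Longrightarrow> norm0s h (der h (\<lambda>s. c)) = 0"
  using norm0s_cong[of h "der h (\<lambda>s. c)" "\<lambda>s. 0"] der_const norm0s_const[of h 0] by force

lemma norm0_le:
  assumes "h \<ge> 0" "\<And>s. s \<in> {-h..0} \<Longrightarrow> \<bar>fst y s\<bar> \<le> c \<and> \<bar>snd y s\<bar> \<le> c"
  shows "norm0 h y \<le> c"
  unfolding norm0_def using assms by (auto intro: norm0s_le)

lemma norm1_le:
  assumes "h \<ge> 0"
    and "\<And>s. s \<in> {-h..0} \<Longrightarrow> \<bar>fst y s\<bar> \<le> a \<and> \<bar>snd y s\<bar> \<le> a"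
    and "\<And>s. s \<in> {-h..0} \<Longrightarrow> \<bar>der h (fst y) s\<bar> \<le> b \<and> \<bar>der h (snd y) s\<bar> \<le> b"
  shows "norm1 h y \<le> a + b"
  using norm0_le[OF assms(1,2)] norm0_le[of h "(der h (fst y), der h (snd y))" b] assms(1,3)
  unfolding norm1_def by fastforce

lemma norm1_nonneg:
  assumes "h > 0" "C1s h (fst y)" "C1s h (snd y)"
  shows "0 \<le> norm1 h y"
  unfolding norm1_def norm0_def
  using norm0s_nonneg[OF _ C1s_continuous[OF assms(1,2)]]
    norm0s_nonneg[OF _ C1s_continuous_der[OF assms(1,2)]] assms(1)
  by (simp add: le_max_iff_disj)

lemma d1_nonneg:
  assumes "h > 0" "C1s h (fst x)" "C1s h (snd x)" "C1s h (fst y)" "C1s h (snd y)"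
  shows "0 \<le> d1 h x y"
  unfolding d1_def using assms
  by (intro norm1_nonneg) (auto simp: psub_def intro: C1s_diff)

lemma d1_self: "h > 0 \<Longrightarrow> d1 h x x = 0"
  unfolding d1_def norm1_def norm0_def psub_def by (simp add: norm0s_const norm0s_der_const)

definition vshift :: "real \<Rightarrow> st \<Rightarrow> st" where
  "vshift c y = (fst y, \<lambda>s. snd y s + c)"

definition vunit :: st where
  "vunit = ((\<lambda>s. 0), (\<lambda>s. 1))"

lemma vshift_0 [simp]: "vshift 0 y = y"
  unfolding vshift_def by simp

lemma padd_vshift_vunit: "padd (vshift a y) (pscale t vunit) = vshift (a + t) y"
  unfolding padd_def pscale_def vshift_def vunit_def by (simp add: algebra_simps)

lemma norm1_pscale_vunit: "h > 0 \<Longrightarrow> norm1 h (pscale t vunit) = \<bar>t\<bar>"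
  unfolding norm1_def norm0_def pscale_def vunit_def by (simp add: norm0s_const norm0s_der_const)

lemma d1_vshift_le:
  assumes h: "h > 0" and C: "C1s h (fst x)" "C1s h (snd x)" "C1s h (fst y)" "C1s h (snd y)"
  shows "d1 h (vshift c x) y \<le> d1 h x y + \<bar>c\<bar>"
proof -
  define f g where "f s = fst x s - fst y s" and "g s = snd x s - snd y s" for s
  have Cf: "C1s h f" "C1s h g" unfolding f_def g_def using C by (auto intro: C1s_diff)
  have "norm0s h (\<lambda>s. g s + c) \<le> norm0s h g + \<bar>c\<bar>"
    using abs_le_norm0s[OF C1s_continuous[OF h Cf(2)]] h
    by (intro norm0s_le) (auto intro: order.trans[OF abs_triangle_ineq])
  moreover have "norm0s h (der h (\<lambda>s. g s + c)) = norm0s h (der h g)"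
    by (rule norm0s_cong) (use der_add_const[OF h Cf(2)] in auto)
  moreover have "psub (vshift c x) y = (f, \<lambda>s. g s + c)" "psub x y = (f, g)"
    unfolding psub_def vshift_def f_def g_def by (auto simp: algebra_simps)
  ultimately show ?thesis unfolding d1_def norm1_def norm0_def by auto
qed

lemma last_level_crossing:
  fixes f :: "real \<Rightarrow> real"
  assumes "a \<le> b" "continuous_on {a..b} f" "f a \<le> L" "L < f b"
  obtains c where "a \<le> c" "c < b" "f c = L" "\<And>r. c < r \<Longrightarrow> r \<le> b \<Longrightarrow> L < f r"
proof -
  define T where "T = {a..b} \<inter> f -` {..L}"
  have closed: "closed T" unfolding T_def
    by (rule continuous_closed_preimage[OF assms(2)]) auto
  have aT: "a \<in> T" and bdd: "bdd_above T" using assms unfolding T_def by (auto simp: bdd_above_def)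
  define c where "c = Sup T"
  have "c \<in> T" unfolding c_def using closed_contains_Sup[OF _ bdd closed] aT by blast
  then have c: "a \<le> c" "c < b" "f c \<le> L"
    using cSup_upper[OF aT bdd] assms(4) unfolding c_def T_def by (auto simp: order.order_iff_strict)
  have after: "L < f r" if "c < r" "r \<le> b" for r
    using that c cSup_upper[OF _ bdd, of r] unfolding c_def T_def by force
  have "continuous_on {c..b} f" by (rule continuous_on_subset[OF assms(2)]) (use c in auto)
  then obtain r where r: "c \<le> r" "r \<le> b" "f r = L"
    using IVT'[of f c L b] c assms(4) by auto
  then have "r = c" using after[of r] by force
  then show thesis using that c r after by blast
qed

lemma first_exit_time:
  fixes f :: "real \<Rightarrow> real"
  assumes "a \<le> b" "continuous_on {a..b} f" "0 \<le> f a" "f b < 0"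
  obtains t where "a \<le> t" "t < b" "\<And>s. s \<in> {a..t} \<Longrightarrow> 0 \<le> f s"
    "\<And>\<eta>. \<eta> > 0 \<Longrightarrow> \<exists>s. t < s \<and> s < t + \<eta> \<and> f s < 0"
proof -
  define S where "S = {t \<in> {a..b}. \<forall>s\<in>{a..t}. 0 \<le> f s}"
  have aS: "a \<in> S" using assms(1,3) unfolding S_def by auto
  have bdd: "bdd_above S" unfolding S_def bdd_above_def by auto
  define t where "t = Sup S"
  have at: "a \<le> t" unfolding t_def using aS bdd by (rule cSup_upper)
  have tb: "t \<le> b" unfolding t_def using aS by (intro cSup_least) (auto simp: S_def)
  have before: "0 \<le> f s" if "a \<le> s" "s < t" for s
  proof -
    have "s < Sup S" using that(2) unfolding t_def .
    then obtain u where "u \<in> S" "s < u" using less_cSupD[of S s] aS by blast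
    then show ?thesis using that unfolding S_def by auto
  qed
  have ft: "0 \<le> f t"
  proof (cases "a < t")
    case True
    have "continuous_on (closure {a..<t}) f"
      using True tb by (intro continuous_on_subset[OF assms(2)]) auto
    then have "f ` closure {a..<t} \<subseteq> {0..}"
      by (rule image_closure_subset) (use before in auto)
    moreover have "t \<in> closure {a..<t}" using True by simp
    ultimately show ?thesis by blast
  qed (use assms(3) at in auto)
  have upto_t: "0 \<le> f s" if "s \<in> {a..t}" for s
    using that before ft by (cases "s = t") auto
  have tb': "t < b" using tb assms(4) ft by (cases "t = b") auto
  have "\<exists>s. t < s \<and> s < t + \<eta> \<and> f s < 0" if \<eta>: "\<eta> > 0" for \<eta>
  proof (rule ccontr)
    assume none: "\<not> ?thesis"
    define u where "u = min (t + \<eta>/2) b"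
    have "0 \<le> f s" if "s \<in> {a..u}" for s
    proof (cases "s \<le> t")
      case True then show ?thesis using that upto_t by simp
    next
      case False
      then have "t < s" "s < t + \<eta>" using that \<eta> unfolding u_def by auto
      then show ?thesis using none by (meson not_less)
    qed
    then have "u \<in> S" using at tb' \<eta> unfolding S_def u_def by simp
    then have "u \<le> t" unfolding t_def using bdd by (rule cSup_upper)
    then show False using \<eta> tb' unfolding u_def by linarith
  qed
  then show thesis using that at tb' upto_t by blast
qed

lemma linear_differential_ineq_lower:
  fixes f f' :: "real \<Rightarrow> real"
  assumes m: "m > 0" and ab: "a \<le> b" and cont: "continuous_on {a..b} f"
    and der: "\<And>t. a < t \<Longrightarrow> t < b \<Longrightarrow> (f has_real_derivative f' t) (at t)"
    and ineq: "\<And>t. a < t \<Longrightarrow> t < b \<Longrightarrow> c - m * f t \<le> f' t"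
  shows "c/m + (f a - c/m) * exp (-m*(b-a)) \<le> f b"
proof -
  define g where "g t = (f t - c/m) * exp (m*t)" for t
  have "g a \<le> g b"
  proof (rule DERIV_nonneg_imp_increasing_open[OF ab])
    fix t assume t: "a < t" "t < b"
    have "(g has_real_derivative f' t * exp (m*t) + (f t - c/m) * (exp (m*t) * m)) (at t)"
      unfolding g_def using der[OF t] by (auto intro!: derivative_eq_intros)
    moreover have "f' t * exp (m*t) + (f t - c/m) * (exp (m*t) * m) = (f' t + m * f t - c) * exp (m*t)"
      using m by (simp add: field_simps)
    ultimately have "(g has_real_derivative (f' t + m * f t - c) * exp (m*t)) (at t)" by simp
    moreover have "(f' t + m * f t - c) * exp (m*t) \<ge> 0" using ineq[OF t] by simp
    ultimately show "\<exists>y. (g has_real_derivative y) (at t) \<and> 0 \<le> y" by blast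
  qed (use cont in \<open>auto simp: g_def intro!: continuous_intros\<close>)
  then have "(f a - c/m) * (exp (m*a) / exp (m*b)) \<le> f b - c/m"
    unfolding g_def by (simp add: divide_le_eq)
  moreover have "exp (m*a) / exp (m*b) = exp (-m*(b-a))" by (simp add: exp_diff[symmetric] algebra_simps)
  ultimately show ?thesis by simp
qed

lemma linear_differential_ineq_upper:
  fixes f f' :: "real \<Rightarrow> real"
  assumes m: "m > 0" and ab: "a \<le> b" and cont: "continuous_on {a..b} f"
    and der: "\<And>t. a < t \<Longrightarrow> t < b \<Longrightarrow> (f has_real_derivative f' t) (at t)"
    and ineq: "\<And>t. a < t \<Longrightarrow> t < b \<Longrightarrow> f' t \<le> c - m * f t"
  shows "f b \<le> c/m + (f a - c/m) * exp (-m*(b-a))"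
proof -
  have "(-c)/m + (- f a - (-c)/m) * exp (-m*(b-a)) \<le> - f b"
  proof (rule linear_differential_ineq_lower[OF m ab])
    show "continuous_on {a..b} (\<lambda>t. - f t)" using cont by (intro continuous_intros)
    show "((\<lambda>t. - f t) has_real_derivative - f' t) (at t)" if "a < t" "t < b" for t
      using der[OF that] by (rule DERIV_minus)
    show "- c - m * - f t \<le> - f' t" if "a < t" "t < b" for t using ineq[OF that] by simp
  qed
  then show ?thesis by (simp add: algebra_simps)
qed

lemma has_real_derivative_at_if_within_atLeast:
  fixes f :: "real \<Rightarrow> real"
  assumes "(f has_real_derivative d) (at t within {a..})" "a < t"
  shows "(f has_real_derivative d) (at t)"
proof -
  have "(f has_real_derivative d) (at t within {a<..})"
    by (rule has_field_derivative_subset[OF assms(1)]) auto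
  then show ?thesis using at_within_open[of t "{a<..}"] assms(2) by simp
qed

lemma seg_has_real_derivative:
  fixes f f' :: "real \<Rightarrow> real"
  assumes "\<And>t. t \<ge> -h \<Longrightarrow> (f has_real_derivative f' t) (at t within {-h..})" "t \<ge> 0" "s \<in> {-h..0}"
  shows "(seg f t has_real_derivative f' (t+s)) (at s within {-h..0})"
proof -
  have "(f has_real_derivative f' (t+s)) (at (t+s) within {-h..})" using assms by simp
  then have "(f has_real_derivative f' (t+s)) (at ((\<lambda>s. t + s) s) within (\<lambda>s. t + s) ` {-h..0})"
    by (rule has_field_derivative_subset) (use assms(2) in auto)
  moreover have "((\<lambda>s. t + s) has_real_derivative 1) (at s within {-h..0})"
    by (auto intro!: derivative_eq_intros)
  ultimately have "((f \<circ> (\<lambda>s. t + s)) has_real_derivative f' (t+s) * 1) (at s within {-h..0})"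
    by (rule DERIV_image_chain)
  then show ?thesis unfolding seg_def o_def by simp
qed

lemma C1s_seg:
  fixes f f' :: "real \<Rightarrow> real"
  assumes h: "h > 0" and d: "\<And>t. t \<ge> -h \<Longrightarrow> (f has_real_derivative f' t) (at t within {-h..})"
    and c: "continuous_on {-h..} f'" and t: "t \<ge> 0"
  shows "C1s h (seg f t)" "\<And>s. s \<in> {-h..0} \<Longrightarrow> der h (seg f t) s = f' (t+s)"
proof -
  have "continuous_on {-h..0} (\<lambda>s. f' (t+s))"
    by (rule continuous_on_compose2[OF c continuous_on_add[OF continuous_on_const continuous_on_id]])
      (use t in auto)
  then show "C1s h (seg f t)" unfolding C1s_def
    by (intro exI[of _ "\<lambda>s. f' (t+s)"] conjI ballI seg_has_real_derivative[OF d t])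
  show "der h (seg f t) s = f' (t+s)" if "s \<in> {-h..0}" for s
    using der_eqI[OF h that seg_has_real_derivative[OF d t that]] .
qed

lemma Arzela_Ascoli_lipschitz:
  fixes F :: "nat \<Rightarrow> real \<Rightarrow> real"
  assumes K: "K \<ge> 0" and bd: "\<And>n s. s \<in> {a..b} \<Longrightarrow> \<bar>F n s\<bar> \<le> K"
    and lip: "\<And>n s s'. s \<in> {a..b} \<Longrightarrow> s' \<in> {a..b} \<Longrightarrow> \<bar>F n s - F n s'\<bar> \<le> K * \<bar>s - s'\<bar>"
  shows "\<exists>r g. strict_mono r \<and> uniform_limit {a..b} (\<lambda>n. F (r n)) g sequentially"
proof -
  have "\<exists>d>0. \<forall>n y. y \<in> {a..b} \<and> norm (x - y) < d \<longrightarrow> norm (F n x - F n y) < e"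
    if "x \<in> {a..b}" "e > 0" for x e
  proof (intro exI[of _ "e/(K+1)"] conjI allI impI)
    fix n y assume y: "y \<in> {a..b} \<and> norm (x - y) < e/(K+1)"
    have "\<bar>F n x - F n y\<bar> \<le> K * \<bar>x - y\<bar>" using lip that y by blast
    also have "\<dots> \<le> K * (e/(K+1))" using y K by (intro mult_left_mono) auto
    also have "\<dots> < e" using that K by (simp add: field_simps)
    finally show "norm (F n x - F n y) < e" by simp
  qed (use that K in auto)
  note equi = this
  have bd': "\<And>n x. x \<in> {a..b} \<Longrightarrow> norm (F n x) \<le> K" using bd by simp
  show ?thesis
  proof (rule Arzela_Ascoli[OF compact_Icc bd' equi])
    fix g and r :: "nat \<Rightarrow> nat" assume r: "strict_mono r"
      and "\<And>e. 0 < e \<Longrightarrow> \<exists>N. \<forall>n x. n \<ge> N \<and> x \<in> {a..b} \<longrightarrow> norm (F (r n) x - g x) < e"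
    then have "uniform_limit {a..b} (\<lambda>n. F (r n)) g sequentially"
      unfolding uniform_limit_sequentially_iff dist_norm by blast
    with r show ?thesis by blast
  qed
qed

lemma uniform_limit_subseq:
  "uniform_limit S f g sequentially \<Longrightarrow> strict_mono r \<Longrightarrow> uniform_limit S (\<lambda>n. f (r n)) g sequentially"
  using filterlim_compose[OF _ filterlim_subseq] by blast

lemma has_real_derivative_uniform_limit:
  fixes F F' :: "nat \<Rightarrow> real \<Rightarrow> real"
  assumes S: "convex S" and x: "x \<in> S"
    and der: "\<And>n x. x \<in> S \<Longrightarrow> (F n has_real_derivative F' n x) (at x within S)"
    and F: "uniform_limit S F g sequentially" and F': "uniform_limit S F' g' sequentially"
  shows "(g has_real_derivative g' x) (at x within S)"
proof -
  have "\<forall>\<^sub>F n in sequentially. \<forall>x\<in>S. \<forall>d. norm (F' n x * d - g' x * d) \<le> e * norm d"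
    if "e > 0" for e
  proof -
    have "\<bar>F' n x * d - g' x * d\<bar> \<le> e * \<bar>d\<bar>" if "dist (F' n x) (g' x) < e" for n x d
    proof -
      have "\<bar>F' n x * d - g' x * d\<bar> = \<bar>F' n x - g' x\<bar> * \<bar>d\<bar>"
        by (simp add: abs_mult left_diff_distrib[symmetric])
      also have "\<dots> \<le> e * \<bar>d\<bar>" using that by (intro mult_right_mono) (auto simp: dist_real_def)
      finally show ?thesis .
    qed
    then show ?thesis using uniform_limitD[OF F' \<open>e > 0\<close>] by (auto elim!: eventually_mono)
  qed
  note nle = this
  have "\<exists>g2. \<forall>y\<in>S. (\<lambda>n. F n y) \<longlonglongrightarrow> g2 y \<and> (g2 has_derivative (*) (g' y)) (at y within S)"
    using der tendsto_uniform_limitI[OF F x]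
    by (intro has_derivative_sequence[OF S _ nle x, where f = F])
      (auto simp: has_field_derivative_def)
  then obtain g2 where g2: "\<And>y. y \<in> S \<Longrightarrow> (\<lambda>n. F n y) \<longlonglongrightarrow> g2 y"
    "\<And>y. y \<in> S \<Longrightarrow> (g2 has_derivative (*) (g' y)) (at y within S)" by blast
  have "g y = g2 y" if "y \<in> S" for y
    using LIMSEQ_unique[OF tendsto_uniform_limitI[OF F that] g2(1)[OF that]] .
  then have "(g has_derivative (*) (g' x)) (at x within S)"
    by (intro has_derivative_transform[OF x _ g2(2)[OF x]]) auto
  then show ?thesis by (simp add: has_field_derivative_def)
qed

lemma Liminf_gt_if_eventually_ge:
  assumes "\<forall>\<^sub>F t in at_top. c \<le> f t" "e < c"
  shows "ereal e < Liminf at_top (\<lambda>t. ereal (f t))"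
proof -
  have "ereal c \<le> Liminf at_top (\<lambda>t. ereal (f t))"
    using assms(1) by (intro Liminf_bounded) (auto elim: eventually_mono)
  moreover have "ereal e < ereal c" using assms(2) by simp
  ultimately show ?thesis by order
qed

section \<open>Segments with Lipschitz derivative\<close>

text \<open>Arzela-Ascoli applies both to such segments and to their derivatives, which makes sets of
  them compact in \<open>C\<^sup>1\<close>.\<close>

definition regular :: "real \<Rightarrow> real \<Rightarrow> (real \<Rightarrow> real) \<Rightarrow> bool" where
  "regular h K f \<longleftrightarrow> C1s h f \<and> (\<forall>s\<in>{-h..0}. 0 \<le> f s \<and> f s \<le> K \<and> \<bar>der h f s\<bar> \<le> K)
     \<and> (\<forall>s\<in>{-h..0}. \<forall>s'\<in>{-h..0}. \<bar>der h f s - der h f s'\<bar> \<le> K * \<bar>s - s'\<bar>)"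

lemma regular_lipschitz:
  assumes "h > 0" "regular h K f" "s \<in> {-h..0}" "s' \<in> {-h..0}"
  shows "\<bar>f s - f s'\<bar> \<le> K * \<bar>s - s'\<bar>"
proof -
  have "(f has_field_derivative der h f z) (at z within {-h..0})" "norm (der h f z) \<le> K"
    if "z \<in> {-h..0}" for z
    using C1s_has_der[OF assms(1) _ that] assms(2) that unfolding regular_def by auto
  then show ?thesis
    using field_differentiable_bound[OF convex_real_interval(5), of "-h" 0 f "der h f" K s s'] assms(3,4)
    by simp
qed

lemma regular_norm1:
  assumes "h \<ge> 0" "regular h K (fst y)" "regular h K (snd y)"
  shows "norm1 h y \<le> 2 * K"
  using norm1_le[OF assms(1), of y K K] assms(2,3) unfolding regular_def by auto

lemma regular_uniform_limit:
  fixes F :: "nat \<Rightarrow> real \<Rightarrow> real"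
  assumes h: "h > 0" and reg: "\<And>n. regular h K (F n)"
    and F: "uniform_limit {-h..0} F g sequentially"
    and F': "uniform_limit {-h..0} (\<lambda>n. der h (F n)) g' sequentially"
  shows "regular h K g" "\<And>s. s \<in> {-h..0} \<Longrightarrow> der h g s = g' s"
proof -
  have lim: "(\<lambda>n. F n s) \<longlonglongrightarrow> g s" "(\<lambda>n. der h (F n) s) \<longlonglongrightarrow> g' s" if "s \<in> {-h..0}" for s
    using tendsto_uniform_limitI[OF F that] tendsto_uniform_limitI[OF F' that] by auto
  have "\<bar>der h (F 0) 0\<bar> \<le> K" using reg[of 0] h unfolding regular_def by simp
  then have K: "0 \<le> K" using abs_ge_zero[of "der h (F 0) 0"] by linarith
  have "(g has_real_derivative g' s) (at s within {-h..0})" if "s \<in> {-h..0}" for s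
    using C1s_has_der[OF h] reg F F' that unfolding regular_def
    by (intro has_real_derivative_uniform_limit[OF convex_real_interval(5)]) auto
  then show der: "der h g s = g' s" if "s \<in> {-h..0}" for s using der_eqI[OF h that] that by blast
  have bounds: "0 \<le> g s \<and> g s \<le> K \<and> \<bar>g' s\<bar> \<le> K" if s: "s \<in> {-h..0}" for s
    using LIMSEQ_le_const[OF lim(1)[OF s]] LIMSEQ_le_const2[OF lim(1)[OF s]]
      LIMSEQ_le_const2[OF tendsto_rabs[OF lim(2)[OF s]]] reg s unfolding regular_def by blast
  have lip: "\<bar>g' s - g' s'\<bar> \<le> K * \<bar>s - s'\<bar>" if "s \<in> {-h..0}" "s' \<in> {-h..0}" for s s'
    using LIMSEQ_le_const2[OF tendsto_rabs[OF tendsto_diff[OF lim(2) lim(2)]]] reg that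
    unfolding regular_def by blast
  then have "continuous_on {-h..0} g'"
    using K by (intro lipschitz_on_continuous_on[of K]) (auto simp: lipschitz_on_def dist_real_def)
  then have "C1s h g" unfolding C1s_def using \<open>\<And>s. s \<in> {-h..0} \<Longrightarrow> (g has_real_derivative g' s) _\<close>
    by blast
  then show "regular h K g" unfolding regular_def using bounds lip der by simp
qed

lemma regular_subseq:
  fixes F :: "nat \<Rightarrow> real \<Rightarrow> real"
  assumes h: "h > 0" and reg: "\<And>n. regular h K (F n)"
  shows "\<exists>r g. strict_mono r \<and> regular h K g
    \<and> uniform_limit {-h..0} (\<lambda>n. F (r n)) g sequentially
    \<and> uniform_limit {-h..0} (\<lambda>n. der h (F (r n))) (der h g) sequentially"
proof -
  have "\<bar>der h (F 0) 0\<bar> \<le> K" using reg[of 0] h unfolding regular_def by simp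
  then have K: "0 \<le> K" using abs_ge_zero[of "der h (F 0) 0"] by linarith
  have bd: "\<bar>F n s\<bar> \<le> K" "\<bar>der h (F n) s\<bar> \<le> K" if "s \<in> {-h..0}" for n s
    using reg[of n] that unfolding regular_def by auto
  have lip: "\<bar>F n s - F n s'\<bar> \<le> K * \<bar>s - s'\<bar>" "\<bar>der h (F n) s - der h (F n) s'\<bar> \<le> K * \<bar>s - s'\<bar>"
    if "s \<in> {-h..0}" "s' \<in> {-h..0}" for n s s'
    using regular_lipschitz[OF h reg that] reg[of n] that unfolding regular_def by auto
  have "\<exists>r1 g. strict_mono r1 \<and> uniform_limit {-h..0} (\<lambda>n. F (r1 n)) g sequentially"
    by (rule Arzela_Ascoli_lipschitz[OF K, of "-h" 0 F]) (use bd(1) lip(1) in auto)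
  then obtain r1 g where r1: "strict_mono r1" and u1: "uniform_limit {-h..0} (\<lambda>n. F (r1 n)) g sequentially"
    by blast
  have "\<exists>r2 g'. strict_mono r2 \<and> uniform_limit {-h..0} (\<lambda>n. der h (F (r1 (r2 n)))) g' sequentially"
    by (rule Arzela_Ascoli_lipschitz[OF K, of "-h" 0 "\<lambda>n. der h (F (r1 n))"]) (use bd(2) lip(2) in auto)
  then obtain r2 g' where r2: "strict_mono r2"
    and u2: "uniform_limit {-h..0} (\<lambda>n. der h (F (r1 (r2 n)))) g' sequentially" by blast
  have u1': "uniform_limit {-h..0} (\<lambda>n. F (r1 (r2 n))) g sequentially"
    using uniform_limit_subseq[OF u1 r2] .
  have g: "regular h K g" "\<And>s. s \<in> {-h..0} \<Longrightarrow> der h g s = g' s"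
    using regular_uniform_limit[of h K "\<lambda>n. F (r1 (r2 n))", OF h reg u1' u2] by auto
  have "uniform_limit {-h..0} (\<lambda>n. der h (F (r1 (r2 n)))) (der h g) sequentially"
    using u2 g(2) by (simp add: uniform_limit_sequentially_iff)
  with strict_mono_o[OF r1 r2] g(1) u1' show ?thesis unfolding o_def by blast
qed

lemma d1_tendsto_0_if_uniform_limit:
  assumes h: "h > 0"
    and C: "\<And>n. C1s h (fst (y n))" "\<And>n. C1s h (snd (y n))" "C1s h (fst l)" "C1s h (snd l)"
    and u: "uniform_limit {-h..0} (\<lambda>n. fst (y n)) (fst l) sequentially"
      "uniform_limit {-h..0} (\<lambda>n. snd (y n)) (snd l) sequentially"
      "uniform_limit {-h..0} (\<lambda>n. der h (fst (y n))) (der h (fst l)) sequentially"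
      "uniform_limit {-h..0} (\<lambda>n. der h (snd (y n))) (der h (snd l)) sequentially"
  shows "(\<lambda>n. d1 h (y n) l) \<longlonglongrightarrow> 0"
  unfolding tendsto_iff
proof (intro allI impI)
  fix e :: real assume "e > 0"
  then have e: "e/4 > 0" by simp
  from uniform_limitD[OF u(1) e] uniform_limitD[OF u(2) e] uniform_limitD[OF u(3) e] uniform_limitD[OF u(4) e]
  show "\<forall>\<^sub>F n in sequentially. dist (d1 h (y n) l) 0 < e"
  proof eventually_elim
    case (elim n)
    have "d1 h (y n) l \<le> e/4 + e/4"
      unfolding d1_def using elim der_diff[OF h C(1) C(3)] der_diff[OF h C(2) C(4)] h
      by (intro norm1_le) (auto simp: psub_def dist_real_def less_imp_le)
    then show ?case using d1_nonneg[OF h C(1,2) C(3,4)] \<open>e/4 > 0\<close> by (simp add: dist_real_def)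
  qed
qed

lemma setdist1_eq_0_if_mem:
  assumes h: "h > 0" and y: "y \<in> B" and C: "\<And>b. b \<in> B \<Longrightarrow> C1s h (fst b) \<and> C1s h (snd b)"
  shows "setdist1 h y B = 0"
proof -
  have nn: "0 \<le> d1 h y b" if "b \<in> B" for b using C[OF y] C[OF that] d1_nonneg[OF h] by blast
  then have "setdist1 h y B \<le> d1 h y y" unfolding setdist1_def
    by (intro cINF_lower[OF _ y] bdd_belowI[of _ 0]) auto
  moreover have "0 \<le> setdist1 h y B" unfolding setdist1_def using y nn by (intro cINF_greatest) auto
  ultimately show ?thesis using d1_self[OF h] by simp
qed

section \<open>The model\<close>

definition der_from :: "real \<Rightarrow> (real \<Rightarrow> real) \<Rightarrow> real \<Rightarrow> real" where
  "der_from h f = (SOME f'. (\<forall>t\<ge>-h. (f has_real_derivative f' t) (at t within {-h..}))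
                            \<and> continuous_on {-h..} f')"

lemma C1_from_der_from:
  assumes "C1_from h f"
  shows "\<And>t. t \<ge> -h \<Longrightarrow> (f has_real_derivative der_from h f t) (at t within {-h..})"
    and "continuous_on {-h..} (der_from h f)"
  using someI_ex[OF assms[unfolded C1_from_def]] unfolding der_from_def by auto

lemma Uplus_subset_Uset: "Rm < 0 \<Longrightarrow> Uplus h \<subseteq> Uset h Rm"
  unfolding Uplus_def Uset_def by force

locale delay_system =
  fixes h Rm \<mu> :: real and q :: "real \<Rightarrow> real" and j :: "st \<Rightarrow> real"
    and Dj :: "st \<Rightarrow> st \<Rightarrow> real" and sol :: "st \<Rightarrow> st"
  assumes h: "h > 0" and Rm: "Rm < 0" and mu: "\<mu> > 0"
    and Dj_linear: "\<forall>x\<in>Uset h Rm. \<forall>a b. \<forall>c. Cont h a \<and> Cont h b \<longrightarrow>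
          Dj x (padd a b) = Dj x a + Dj x b \<and> Dj x (pscale c a) = c * Dj x a"
    and j_has_Dj: "\<forall>x\<in>Uset h Rm. \<forall>\<epsilon>>0. \<exists>\<delta>>0. \<forall>y. C1s h (fst y) \<and> C1s h (snd y) \<and> norm1 h y < \<delta>
          \<and> padd x y \<in> Uset h Rm \<longrightarrow> \<bar>j (padd x y) - j x - Dj x y\<bar> \<le> \<epsilon> * norm1 h y"
    and Dj_continuous: "\<forall>x\<in>Uset h Rm. \<forall>\<epsilon>>0. \<exists>\<delta>>0. \<forall>x'\<in>Uset h Rm. d1 h x' x < \<delta> \<longrightarrow>
          (\<forall>y. C1s h (fst y) \<and> C1s h (snd y) \<longrightarrow> \<bar>Dj x' y - Dj x y\<bar> \<le> \<epsilon> * norm1 h y)"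
    and j_lip: "\<forall>B. B \<subseteq> Uplus h \<and> bounded1 h B \<longrightarrow>
          (\<exists>L\<ge>0. \<forall>x\<in>B. \<forall>y\<in>B. \<bar>j x - j y\<bar> \<le> L * norm0 h (psub x y))"
    and j_nonneg: "\<forall>x\<in>Uplus h. j x \<ge> 0"
    and j_bdd: "\<forall>B1 B2. B1 \<times> B2 \<subseteq> Uplus h \<and> bounded1s h B1 \<longrightarrow> bounded (j ` (B1 \<times> B2))"
    and q_bdd: "bounded (q ` {Rm<..})"
    and q_C1: "q C1_differentiable_on {Rm<..}"
    and j_small: "\<forall>\<epsilon>>0. \<exists>\<delta>>0. \<forall>x\<in>Uplus h. norm0s h (fst x) \<le> \<delta> \<longrightarrow> j x \<le> \<epsilon>"
    and q0: "q 0 > 0"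
    and q_neg: "\<exists>\<delta>>0. \<exists>zs\<ge>0. \<forall>z\<ge>zs. q z \<le> -\<delta>"
    and j_large: "\<forall>K>0. \<exists>L. \<forall>x\<in>Uplus h. (\<forall>s\<in>{-h..0}. fst x s \<ge> L) \<longrightarrow> j x \<ge> K"
    and sol_ex: "\<forall>x\<in>Xplus h q j \<mu>. is_sol h Rm q j \<mu> x (fst (sol x)) (snd (sol x))"
    and sol_cont: "\<forall>t0\<ge>0. \<forall>x0\<in>Xplus h q j \<mu>. \<forall>\<epsilon>>0. \<exists>\<delta>>0. \<forall>t\<ge>0. \<forall>x\<in>Xplus h q j \<mu>.
          \<bar>t - t0\<bar> < \<delta> \<and> d1 h x x0 < \<delta> \<longrightarrow> d1 h (Sflow sol t x) (Sflow sol t0 x0) < \<epsilon>"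
begin

abbreviation X where "X \<equiv> Xplus h q j \<mu>"
abbreviation W where "W x \<equiv> fst (sol x)"
abbreviation V where "V x \<equiv> snd (sol x)"

lemma sol_is_sol: "x \<in> X \<Longrightarrow> is_sol h Rm q j \<mu> x (W x) (V x)"
  using sol_ex by blast

lemma C1_from_sol:
  assumes "x \<in> X"
  shows "C1_from h (W x)" "C1_from h (V x)"
  using sol_is_sol[OF assms] unfolding is_sol_def by auto

lemma W_deriv:
  assumes "x \<in> X" "t \<ge> 0"
  shows "(W x has_real_derivative q (V x t) * W x t) (at t)"
  using sol_is_sol[OF assms(1)] assms(2) h unfolding is_sol_def
  by (auto intro: has_real_derivative_at_if_within_atLeast)

lemma V_deriv:
  assumes "x \<in> X" "t \<ge> 0"
  shows "(V x has_real_derivative j (seg (W x) t, seg (V x) t) - \<mu> * V x t) (at t)"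
  using sol_is_sol[OF assms(1)] assms(2) h unfolding is_sol_def
  by (auto intro: has_real_derivative_at_if_within_atLeast)

lemma der_from_W:
  assumes "x \<in> X" "t \<ge> 0"
  shows "der_from h (W x) t = q (V x t) * W x t"
proof -
  have "(W x has_real_derivative der_from h (W x) t) (at t)"
    using C1_from_der_from(1)[OF C1_from_sol(1)[OF assms(1)], of t] assms(2) h
    by (auto intro: has_real_derivative_at_if_within_atLeast)
  then show ?thesis using W_deriv[OF assms] DERIV_unique by blast
qed

lemma der_from_V:
  assumes "x \<in> X" "t \<ge> 0"
  shows "der_from h (V x) t = j (seg (W x) t, seg (V x) t) - \<mu> * V x t"
proof -
  have "(V x has_real_derivative der_from h (V x) t) (at t)"
    using C1_from_der_from(1)[OF C1_from_sol(2)[OF assms(1)], of t] assms(2) h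
    by (auto intro: has_real_derivative_at_if_within_atLeast)
  then show ?thesis using V_deriv[OF assms] DERIV_unique by blast
qed

lemma continuous_on_C1_from:
  assumes "C1_from h f"
  shows "continuous_on {-h..} f"
  unfolding continuous_on_eq_continuous_within
  using C1_from_der_from(1)[OF assms] DERIV_continuous by fastforce

lemma W_cont: "x \<in> X \<Longrightarrow> continuous_on {-h..} (W x)"
  and V_cont: "x \<in> X \<Longrightarrow> continuous_on {-h..} (V x)"
  using continuous_on_C1_from C1_from_sol by auto

lemma V_gt_Rm: "x \<in> X \<Longrightarrow> t \<ge> -h \<Longrightarrow> V x t > Rm"
  using sol_is_sol unfolding is_sol_def by auto

lemma sol_init:
  assumes "x \<in> X" "s \<in> {-h..0}"
  shows "W x s = fst x s" "V x s = snd x s"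
  using sol_is_sol[OF assms(1)] assms(2) unfolding is_sol_def by auto

lemma Xplus_subset_Uplus: "X \<subseteq> Uplus h"
  unfolding Xplus_def by auto

lemma sol_init_nonneg:
  assumes "x \<in> X" "s \<in> {-h..0}"
  shows "0 \<le> W x s" "0 \<le> V x s"
  using sol_init[OF assms] Xplus_subset_Uplus assms unfolding Uplus_def by auto

lemma C1s_seg_sol:
  assumes "x \<in> X" "t \<ge> 0"
  shows "C1s h (seg (W x) t)" "C1s h (seg (V x) t)"
    and "\<And>s. s \<in> {-h..0} \<Longrightarrow> der h (seg (W x) t) s = der_from h (W x) (t+s)"
    and "\<And>s. s \<in> {-h..0} \<Longrightarrow> der h (seg (V x) t) s = der_from h (V x) (t+s)"
  using C1s_seg[OF h C1_from_der_from[OF C1_from_sol(1)[OF assms(1)]] assms(2)]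
    C1s_seg[OF h C1_from_der_from[OF C1_from_sol(2)[OF assms(1)]] assms(2)] by auto

lemma q_cont: "continuous_on {Rm<..} q"
  using q_C1 by (rule C1_differentiable_imp_continuous_on)

definition q_max where "q_max = (SOME Q. Q > 0 \<and> (\<forall>z>Rm. \<bar>q z\<bar> \<le> Q))"

lemma q_max: "q_max > 0" "\<And>z. z > Rm \<Longrightarrow> \<bar>q z\<bar> \<le> q_max"
proof -
  obtain B where "\<forall>y\<in>q ` {Rm<..}. norm y \<le> B" using q_bdd unfolding bounded_iff by blast
  then have "\<exists>Q. Q > 0 \<and> (\<forall>z>Rm. \<bar>q z\<bar> \<le> Q)" by (intro exI[of _ "max B 1"]) force
  from someI_ex[OF this] show "q_max > 0" "\<And>z. z > Rm \<Longrightarrow> \<bar>q z\<bar> \<le> q_max"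
    unfolding q_max_def by auto
qed

lemma abs_qV_le: "x \<in> X \<Longrightarrow> t \<ge> -h \<Longrightarrow> \<bar>q (V x t)\<bar> \<le> q_max"
  using q_max(2) V_gt_Rm by blast

lemma qV_cont_on:
  assumes "x \<in> X" "-h \<le> a"
  shows "continuous_on {a..b} (\<lambda>s. q (V x s))"
  by (rule continuous_on_compose2[OF q_cont continuous_on_subset[OF V_cont[OF assms(1)]]])
    (use V_gt_Rm[OF assms(1)] assms(2) in auto)

lemma W_eq_exp_integral:
  assumes x: "x \<in> X" and ab: "0 \<le> a" "a \<le> b"
  shows "W x b = W x a * exp (integral {a..b} (\<lambda>s. q (V x s)))"
proof (cases "a = b")
  case False
  define G where "G t = integral {a..t} (\<lambda>s. q (V x s))" for t
  define g where "g t = W x t * exp (- G t)" for t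
  have cq: "continuous_on {a..b} (\<lambda>s. q (V x s))" using qV_cont_on[OF x] ab h by simp
  have "continuous_on {a..b} g" unfolding g_def G_def
    using indefinite_integral_continuous_1[OF integrable_continuous_interval[OF cq]]
      continuous_on_subset[OF W_cont[OF x], of "{a..b}"] ab h
    by (auto intro!: continuous_intros)
  moreover have "(g has_real_derivative 0) (at t)" if t: "a < t" "t < b" for t
  proof -
    have "(G has_real_derivative q (V x t)) (at t)"
      using integral_has_vector_derivative[OF cq, of t] at_within_interior[of t "{a..b}"] t
      unfolding G_def by (simp add: has_real_derivative_iff_has_vector_derivative)
    then show ?thesis unfolding g_def
      using W_deriv[OF x, of t] t ab by (auto intro!: derivative_eq_intros simp: algebra_simps)
  qed
  ultimately have "g b = g a" using False ab by (intro DERIV_isconst_end) auto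
  then show ?thesis unfolding g_def G_def by (simp add: exp_minus field_simps)
qed simp

lemma W_lower_exp:
  assumes x: "x \<in> X" and ab: "0 \<le> a" "a \<le> b" and q: "\<And>s. s \<in> {a..b} \<Longrightarrow> \<alpha> \<le> q (V x s)"
  shows "W x a * exp (\<alpha> * (b - a)) \<le> W x b"
proof -
  have "integral {a..b} (\<lambda>s. \<alpha>) \<le> integral {a..b} (\<lambda>s. q (V x s))"
    using q integrable_continuous_interval[OF qV_cont_on[OF x]] ab h by (intro integral_le) auto
  moreover have "0 \<le> W x a"
    using W_eq_exp_integral[OF x order.refl ab(1)] sol_init_nonneg(1)[OF x, of 0] h by simp
  ultimately show ?thesis
    unfolding W_eq_exp_integral[OF x ab] using ab by (intro mult_left_mono) (auto simp: mult.commute)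
qed

lemma W_upper_exp:
  assumes x: "x \<in> X" and ab: "0 \<le> a" "a \<le> b" and q: "\<And>s. s \<in> {a..b} \<Longrightarrow> q (V x s) \<le> \<beta>"
  shows "W x b \<le> W x a * exp (\<beta> * (b - a))"
proof -
  have "integral {a..b} (\<lambda>s. q (V x s)) \<le> integral {a..b} (\<lambda>s. \<beta>)"
    using q integrable_continuous_interval[OF qV_cont_on[OF x]] ab h by (intro integral_le) auto
  moreover have "0 \<le> W x a"
    using W_eq_exp_integral[OF x order.refl ab(1)] sol_init_nonneg(1)[OF x, of 0] h by simp
  ultimately show ?thesis
    unfolding W_eq_exp_integral[OF x ab] using ab by (intro mult_left_mono) (auto simp: mult.commute)
qed

lemma W_nonneg:
  assumes x: "x \<in> X" and t: "t \<ge> -h"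
  shows "0 \<le> W x t"
proof (cases "t \<le> 0")
  case False
  then show ?thesis using W_eq_exp_integral[OF x, of 0 t] sol_init_nonneg(1)[OF x, of 0] h by simp
qed (use sol_init_nonneg[OF x] t in auto)

lemma W_pos:
  assumes x: "x \<in> X" and "fst x 0 > 0" "t \<ge> 0"
  shows "0 < W x t"
  using W_eq_exp_integral[OF x, of 0 t] sol_init(1)[OF x, of 0] assms h by simp

lemma W_exp_q_max:
  assumes x: "x \<in> X" and ab: "0 \<le> a" "a \<le> b"
  shows "W x a * exp (- q_max * (b - a)) \<le> W x b" "W x b \<le> W x a * exp (q_max * (b - a))"
proof -
  have q: "- q_max \<le> q (V x s) \<and> q (V x s) \<le> q_max" if "s \<in> {a..b}" for s
    using abs_qV_le[OF x, of s] that ab h by (auto simp: abs_le_iff)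
  show "W x a * exp (- q_max * (b - a)) \<le> W x b" using q by (intro W_lower_exp[OF x ab]) auto
  show "W x b \<le> W x a * exp (q_max * (b - a))" using q by (intro W_upper_exp[OF x ab]) auto
qed

lemma V_lower_linear:
  assumes x: "x \<in> X" and ab: "0 \<le> a" "a \<le> b"
    and K: "\<And>t. a < t \<Longrightarrow> t < b \<Longrightarrow> K \<le> j (seg (W x) t, seg (V x) t)"
  shows "K/\<mu> + (V x a - K/\<mu>) * exp (-\<mu>*(b-a)) \<le> V x b"
  using V_deriv[OF x] K ab continuous_on_subset[OF V_cont[OF x], of "{a..b}"] h
  by (intro linear_differential_ineq_lower[OF mu ab(2),
        where f' = "\<lambda>t. j (seg (W x) t, seg (V x) t) - \<mu> * V x t"]) force+

lemma V_upper_linear: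
  assumes x: "x \<in> X" and ab: "0 \<le> a" "a \<le> b"
    and K: "\<And>t. a < t \<Longrightarrow> t < b \<Longrightarrow> j (seg (W x) t, seg (V x) t) \<le> K"
  shows "V x b \<le> K/\<mu> + (V x a - K/\<mu>) * exp (-\<mu>*(b-a))"
  using V_deriv[OF x] K ab continuous_on_subset[OF V_cont[OF x], of "{a..b}"] h
  by (intro linear_differential_ineq_upper[OF mu ab(2),
        where f' = "\<lambda>t. j (seg (W x) t, seg (V x) t) - \<mu> * V x t"]) force+

lemma V_lower_drift:
  assumes x: "x \<in> X" and ab: "0 \<le> a" "a \<le> b" and Va: "0 \<le> V x a" and K: "0 \<le> K"
    and j: "\<And>t. a < t \<Longrightarrow> t < b \<Longrightarrow> - K \<le> j (seg (W x) t, seg (V x) t)"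
  shows "- (K * (b - a)) \<le> V x b"
proof -
  define A E where "A = K/\<mu>" and "E = exp (-\<mu>*(b-a))"
  have "-K/\<mu> + (V x a - -K/\<mu>) * exp (-\<mu>*(b-a)) \<le> V x b" by (rule V_lower_linear[OF x ab j])
  then have "- A + V x a * E + A * E \<le> V x b" unfolding A_def E_def by (simp add: distrib_right)
  moreover have "0 \<le> V x a * E" using Va unfolding E_def by simp
  moreover have "A * (1 - \<mu>*(b-a)) \<le> A * E"
    using exp_ge_add_one_self[of "-\<mu>*(b-a)"] K mu unfolding A_def E_def by (intro mult_left_mono) auto
  moreover have "A * (1 - \<mu>*(b-a)) = A - K*(b-a)" unfolding A_def using mu by (simp add: field_simps)
  ultimately show ?thesis by linarith
qed

lemma j_eq_0_if_fst_0:
  assumes y: "y \<in> Uplus h" and zero: "\<And>s. s \<in> {-h..0} \<Longrightarrow> fst y s = 0"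
  shows "j y = 0"
proof -
  have "norm0s h (fst y) = 0" using norm0s_cong[of h "fst y" "\<lambda>s. 0"] norm0s_const[of h 0] zero h by simp
  have "j y \<le> e" if e: "e > 0" for e
  proof -
    obtain \<delta> where "\<delta> > 0" "\<forall>y\<in>Uplus h. norm0s h (fst y) \<le> \<delta> \<longrightarrow> j y \<le> e"
      using j_small[rule_format, OF e] by blast
    then show ?thesis using y \<open>norm0s h (fst y) = 0\<close> by simp
  qed
  then show ?thesis using j_nonneg y by (meson antisym dense_le_bounded not_le)
qed

subsection \<open>Nonnegativity\<close>

lemma j_vshift_has_derivative:
  assumes y: "C1s h (fst y)" "C1s h (snd y)" and m: "m > 0"
    and margin: "\<And>s. s \<in> {-h..0} \<Longrightarrow> Rm + m < snd y s + \<sigma>"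
  shows "((\<lambda>\<sigma>. j (vshift \<sigma> y)) has_real_derivative Dj (vshift \<sigma> y) vunit) (at \<sigma>)"
  unfolding DERIV_def LIM_eq
proof (intro allI impI)
  fix r :: real assume r: "r > 0"
  have in_U: "vshift \<tau> y \<in> Uset h Rm" if "\<bar>\<tau> - \<sigma>\<bar> < m" for \<tau>
    using margin that y unfolding Uset_def vshift_def by (force intro: C1s_add_const)
  obtain \<delta> where \<delta>: "\<delta> > 0" and fr: "\<forall>z. C1s h (fst z) \<and> C1s h (snd z) \<and> norm1 h z < \<delta>
      \<and> padd (vshift \<sigma> y) z \<in> Uset h Rm \<longrightarrow>
      \<bar>j (padd (vshift \<sigma> y) z) - j (vshift \<sigma> y) - Dj (vshift \<sigma> y) z\<bar> \<le> (r/2) * norm1 h z"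
    using bspec[OF j_has_Dj in_U[of \<sigma>], rule_format, of "r/2"] m r by auto
  show "\<exists>s>0. \<forall>\<tau>. \<tau> \<noteq> 0 \<and> norm (\<tau> - 0) < s \<longrightarrow>
      norm ((j (vshift (\<sigma> + \<tau>) y) - j (vshift \<sigma> y)) / \<tau> - Dj (vshift \<sigma> y) vunit) < r"
  proof (intro exI[of _ "min \<delta> m"] conjI allI impI)
    fix \<tau> :: real assume \<tau>: "\<tau> \<noteq> 0 \<and> norm (\<tau> - 0) < min \<delta> m"
    have "Cont h vunit" unfolding Cont_def vunit_def by simp
    then have "Dj (vshift \<sigma> y) (pscale \<tau> vunit) = \<tau> * Dj (vshift \<sigma> y) vunit"
      using bspec[OF Dj_linear in_U[of \<sigma>], rule_format, of vunit vunit \<tau>] m by simp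
    moreover have "C1s h (fst (pscale \<tau> vunit))" "C1s h (snd (pscale \<tau> vunit))"
      unfolding pscale_def vunit_def by (simp_all add: C1s_const)
    ultimately have "\<bar>j (vshift (\<sigma> + \<tau>) y) - j (vshift \<sigma> y) - \<tau> * Dj (vshift \<sigma> y) vunit\<bar> \<le> (r/2) * \<bar>\<tau>\<bar>"
      using fr[rule_format, of "pscale \<tau> vunit"] in_U[of "\<sigma> + \<tau>"] \<tau>
      by (simp add: norm1_pscale_vunit[OF h] padd_vshift_vunit)
    then have "\<bar>(j (vshift (\<sigma> + \<tau>) y) - j (vshift \<sigma> y)) / \<tau> - Dj (vshift \<sigma> y) vunit\<bar> \<le> r/2"
      using \<tau> by (simp add: divide_simps abs_divide split: if_splits) (simp add: algebra_simps)
    then show "norm ((j (vshift (\<sigma> + \<tau>) y) - j (vshift \<sigma> y)) / \<tau> - Dj (vshift \<sigma> y) vunit) < r"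
      using r by simp
  qed (use \<delta> m in simp)
qed

text \<open>By the mean value theorem along \<open>vunit\<close>, with \<open>Dj\<close> bounded near \<open>x0\<close>, lifting the
  second component by \<open>c\<close> changes \<open>j\<close> by at most \<open>c M\<close>; a state that is lifted into
  \<open>Uplus h\<close> thus has \<open>j \<ge> -c M\<close>.\<close>

lemma j_lower_bound_near_Uplus:
  assumes x0: "x0 \<in> Uplus h"
  obtains \<delta> M where "\<delta> > 0" "M \<ge> 0"
    "\<And>y c. C1s h (fst y) \<Longrightarrow> C1s h (snd y) \<Longrightarrow> d1 h y x0 < \<delta> \<Longrightarrow> 0 < c \<Longrightarrow> c < \<delta> \<Longrightarrow>
       (\<forall>s\<in>{-h..0}. 0 \<le> fst y s \<and> -c \<le> snd y s) \<Longrightarrow> - c * M \<le> j y"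
proof -
  have x0U: "x0 \<in> Uset h Rm" and x0C: "C1s h (fst x0)" "C1s h (snd x0)"
    using x0 Uplus_subset_Uset[OF Rm] unfolding Uplus_def by auto
  obtain \<delta>' where \<delta>': "\<delta>' > 0" and near: "\<forall>x'\<in>Uset h Rm. d1 h x' x0 < \<delta>' \<longrightarrow>
      (\<forall>y. C1s h (fst y) \<and> C1s h (snd y) \<longrightarrow> \<bar>Dj x' y - Dj x0 y\<bar> \<le> 1 * norm1 h y)"
    using Dj_continuous x0U by (meson zero_less_one)
  define \<delta> where "\<delta> = min (\<delta>'/2) (-Rm/2)"
  define M where "M = \<bar>Dj x0 vunit\<bar> + 1"
  have "- c * M \<le> j y"
    if y: "C1s h (fst y)" "C1s h (snd y)" "d1 h y x0 < \<delta>" and c: "0 < c" "c < \<delta>"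
      and sign: "\<forall>s\<in>{-h..0}. 0 \<le> fst y s \<and> -c \<le> snd y s" for y c
  proof -
    have margin: "Rm + (-Rm/2) < snd y s + \<sigma>" if "s \<in> {-h..0}" "0 \<le> \<sigma>" for s \<sigma>
      using sign that c unfolding \<delta>_def by force
    obtain \<xi> where \<xi>: "0 < \<xi>" "\<xi> < c"
      and mvt: "j (vshift c y) - j (vshift 0 y) = (c - 0) * Dj (vshift \<xi> y) vunit"
      using MVT2[OF c(1), of "\<lambda>\<sigma>. j (vshift \<sigma> y)" "\<lambda>\<sigma>. Dj (vshift \<sigma> y) vunit"]
        j_vshift_has_derivative[OF y(1,2) _ margin] Rm by force
    have "vshift \<xi> y \<in> Uset h Rm"
      using margin[of _ \<xi>] \<xi> Rm y unfolding Uset_def vshift_def by (force intro: C1s_add_const)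
    moreover have "d1 h (vshift \<xi> y) x0 < \<delta>'"
      using d1_vshift_le[OF h y(1,2) x0C, of \<xi>] y(3) \<xi> c unfolding \<delta>_def by linarith
    moreover have "C1s h (fst vunit)" "C1s h (snd vunit)" "norm1 h vunit = 1"
      using norm1_pscale_vunit[OF h, of 1] by (simp_all add: vunit_def pscale_def C1s_const)
    ultimately have "\<bar>Dj (vshift \<xi> y) vunit\<bar> \<le> M"
      using near unfolding M_def by fastforce
    then have "c * Dj (vshift \<xi> y) vunit \<le> c * M"
      using c by (intro mult_left_mono) (auto simp: abs_le_iff)
    moreover have "vshift c y \<in> Uplus h"
      using sign y unfolding Uplus_def vshift_def by (auto intro: C1s_add_const)
    ultimately show ?thesis using mvt j_nonneg by fastforce
  qed
  moreover have "\<delta> > 0" "M \<ge> 0" unfolding \<delta>_def M_def using \<delta>' Rm by auto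
  ultimately show thesis using that by blast
qed

lemma Sflow_near_time:
  assumes x: "x \<in> X" and t1: "0 \<le> t1" and \<delta>: "0 < \<delta>"
  obtains \<eta> where "0 < \<eta>" "\<And>t. 0 \<le> t \<Longrightarrow> \<bar>t - t1\<bar> < \<eta> \<Longrightarrow>
    d1 h (Sflow sol t x) (Sflow sol t1 x) < \<delta> \<and> V x t1 - \<delta> < V x t"
proof -
  obtain \<eta>1 where \<eta>1: "0 < \<eta>1"
    "\<And>t. 0 \<le> t \<Longrightarrow> \<bar>t - t1\<bar> < \<eta>1 \<Longrightarrow> d1 h (Sflow sol t x) (Sflow sol t1 x) < \<delta>"
    using sol_cont t1 x \<delta> d1_self[OF h, of x] by metis
  have "continuous (at t1) (V x)" using DERIV_isCont[OF V_deriv[OF x t1]] by (simp add: isCont_def continuous_at)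
  then obtain \<eta>2 where \<eta>2: "0 < \<eta>2" "\<And>t. dist t t1 < \<eta>2 \<Longrightarrow> dist (V x t) (V x t1) < \<delta>"
    using \<delta> unfolding continuous_at_eps_delta by blast
  show thesis
    by (rule that[of "min \<eta>1 \<eta>2"]) (use \<eta>1 \<eta>2 in \<open>auto simp: dist_real_def abs_diff_less_iff\<close>)
qed

text \<open>Quasi-positivity: nonnegativity of \<open>V\<close> on \<open>[-h, t1]\<close> extends a little beyond \<open>t1\<close>.
  Otherwise let \<open>-c < 0\<close> be the minimum of \<open>V\<close> on a short window \<open>[t1, t1 + \<eta>]\<close>; there
  \<open>j \<ge> -c M\<close>, so \<open>V\<close> cannot fall below \<open>-c M \<eta> \<ge> -c/2\<close>.\<close>

lemma V_nonneg_extends: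
  assumes x: "x \<in> X" and t1: "0 \<le> t1" and nn: "\<And>s. s \<in> {-h..t1} \<Longrightarrow> 0 \<le> V x s"
  obtains \<eta> where "\<eta> > 0" "\<And>s. s \<in> {t1..t1+\<eta>} \<Longrightarrow> 0 \<le> V x s"
proof -
  define x0 where "x0 = Sflow sol t1 x"
  have V1: "0 \<le> V x t1" using nn[of t1] t1 h by simp
  have "x0 \<in> Uplus h"
    using C1s_seg_sol[OF x t1] W_nonneg[OF x] nn t1
    unfolding x0_def Sflow_def seg_def Uplus_def by auto
  then obtain \<delta> M where \<delta>: "\<delta> > 0" and M: "M \<ge> 0" and jlow: "\<And>y c. C1s h (fst y) \<Longrightarrow>
      C1s h (snd y) \<Longrightarrow> d1 h y x0 < \<delta> \<Longrightarrow> 0 < c \<Longrightarrow> c < \<delta> \<Longrightarrow>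
      (\<forall>s\<in>{-h..0}. 0 \<le> fst y s \<and> -c \<le> snd y s) \<Longrightarrow> - c * M \<le> j y"
    using j_lower_bound_near_Uplus by metis
  obtain \<eta>0 where \<eta>0: "0 < \<eta>0" "\<And>t. 0 \<le> t \<Longrightarrow> \<bar>t - t1\<bar> < \<eta>0 \<Longrightarrow>
      d1 h (Sflow sol t x) x0 < \<delta> \<and> V x t1 - \<delta> < V x t"
    using Sflow_near_time[OF x t1 \<delta>] unfolding x0_def by metis
  define e where "e = 1 / (2 * (M + 1))"
  define \<eta> where "\<eta> = min \<eta>0 e / 2"
  have e: "0 < e" "M * e \<le> 1/2" using M unfolding e_def by (simp_all add: field_simps)
  have \<eta>: "0 < \<eta>" "\<eta> < \<eta>0" "\<eta> \<le> e" using \<eta>0(1) e unfolding \<eta>_def by auto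
  have "M * \<eta> \<le> M * e" using \<eta>(3) M by (rule mult_left_mono)
  then have M\<eta>: "M * \<eta> \<le> 1/2" using e by linarith
  have "0 \<le> V x s" if s: "s \<in> {t1..t1+\<eta>}" for s
  proof (rule ccontr)
    assume neg: "\<not> 0 \<le> V x s"
    have "continuous_on {t1..t1+\<eta>} (V x)"
      by (rule continuous_on_subset[OF V_cont[OF x]]) (use t1 h in auto)
    then obtain t2 where t2: "t2 \<in> {t1..t1+\<eta>}" and min: "\<And>s. s \<in> {t1..t1+\<eta>} \<Longrightarrow> V x t2 \<le> V x s"
      using continuous_attains_inf[OF compact_Icc] \<eta>(1) by (metis atLeastatMost_empty_iff2 less_eq_real_def
          less_add_same_cancel1)
    define c where "c = - V x t2"
    have c: "0 < c" "c < \<delta>" using min[OF s] neg \<eta>0(2)[of t2] V1 t2 t1 \<eta> unfolding c_def by auto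
    have t12: "t1 < t2" using t2 c V1 unfolding c_def by (cases "t2 = t1") auto
    have "- (c * M) \<le> j (seg (W x) t, seg (V x) t)" if t: "t1 < t" "t < t2" for t
    proof -
      have "-c \<le> V x (t + s)" if "s \<in> {-h..0}" for s
        using nn[of "t + s"] min[of "t + s"] that t t1 t2 c unfolding c_def by (cases "t + s \<le> t1") auto
      then have "- c * M \<le> j (seg (W x) t, seg (V x) t)"
        using jlow[of "(seg (W x) t, seg (V x) t)" c] C1s_seg_sol[OF x, of t] \<eta>0(2)[of t] W_nonneg[OF x]
          t t1 t2 \<eta> c unfolding Sflow_def seg_def by simp
      then show ?thesis by simp
    qed
    then have "- (c * M * (t2 - t1)) \<le> V x t2"
      using V_lower_drift[OF x t1 _ V1, of t2 "c * M"] t12 c M by simp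
    moreover have "c * M * (t2 - t1) \<le> c * (1/2)"
    proof -
      have "M * (t2 - t1) \<le> M * \<eta>" using t2 M by (intro mult_left_mono) auto
      then have "M * (t2 - t1) \<le> 1/2" using M\<eta> by linarith
      then show ?thesis using c by (simp add: mult.assoc mult_left_mono)
    qed
    ultimately show False using c unfolding c_def by linarith
  qed
  with \<eta>(1) show thesis by (rule that)
qed

lemma V_nonneg:
  assumes x: "x \<in> X" and t: "t \<ge> -h"
  shows "0 \<le> V x t"
proof (rule ccontr)
  assume neg: "\<not> 0 \<le> V x t"
  show False
  proof (rule first_exit_time[of "-h" t "V x"])
    show "continuous_on {-h..t} (V x)" by (rule continuous_on_subset[OF V_cont[OF x]]) auto
    show "0 \<le> V x (-h)" using sol_init_nonneg(2)[OF x, of "-h"] h by simp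
    fix t1 assume t1: "-h \<le> t1" "t1 < t" and nn: "\<And>s. s \<in> {-h..t1} \<Longrightarrow> 0 \<le> V x s"
      and exit: "\<And>\<eta>. \<eta> > 0 \<Longrightarrow> \<exists>s. t1 < s \<and> s < t1 + \<eta> \<and> V x s < 0"
    have "0 \<le> t1"
    proof (rule ccontr)
      assume "\<not> 0 \<le> t1"
      then obtain s where "t1 < s" "s < 0" "V x s < 0" using exit[of "-t1"] by auto
      then show False using sol_init_nonneg(2)[OF x, of s] t1 by auto
    qed
    then obtain \<eta> where "\<eta> > 0" and nn': "\<And>s. s \<in> {t1..t1+\<eta>} \<Longrightarrow> 0 \<le> V x s"
      using V_nonneg_extends[OF x _ nn] by blast
    then obtain s where "t1 < s" "s < t1 + \<eta>" "V x s < 0" using exit by blast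
    then show False using nn'[of s] by auto
  qed (use t neg in auto)
qed

lemma seg_sol_Uplus:
  assumes "x \<in> X" "t \<ge> 0"
  shows "(seg (W x) t, seg (V x) t) \<in> Uplus h"
  using C1s_seg_sol[OF assms] W_nonneg[OF assms(1)] V_nonneg[OF assms(1)] assms(2)
  unfolding Uplus_def seg_def by auto

lemma j_seg_sol_nonneg: "x \<in> X \<Longrightarrow> t \<ge> 0 \<Longrightarrow> 0 \<le> j (seg (W x) t, seg (V x) t)"
  using j_nonneg seg_sol_Uplus by blast

lemma Sflow_in_X:
  assumes x: "x \<in> X" and t: "t \<ge> 0"
  shows "Sflow sol t x \<in> X"
  using seg_sol_Uplus[OF x t] C1s_seg_sol(3,4)[OF x t, of 0] der_from_W[OF x t] der_from_V[OF x t] h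
  unfolding Xplus_def Fmap_def Sflow_def by (simp add: seg_def)

subsection \<open>Dissipativity\<close>

lemma V_decay:
  assumes x: "x \<in> X" and ab: "0 \<le> a" "a \<le> b"
  shows "V x a * exp (-\<mu>*(b-a)) \<le> V x b"
  using V_lower_linear[OF x ab, of 0] j_seg_sol_nonneg[OF x] ab by auto

definition q_neg_rate where "q_neg_rate = (SOME d. d > 0 \<and> (\<exists>z\<ge>0. \<forall>y\<ge>z. q y \<le> -d))"
definition q_neg_level where "q_neg_level = (SOME z. z \<ge> 0 \<and> (\<forall>y\<ge>z. q y \<le> -q_neg_rate))"

lemma q_neg_level: "q_neg_rate > 0" "q_neg_level \<ge> 0" "\<And>z. z \<ge> q_neg_level \<Longrightarrow> q z \<le> -q_neg_rate"
proof -
  have "\<exists>d. d > 0 \<and> (\<exists>z\<ge>0. \<forall>y\<ge>z. q y \<le> -d)" using q_neg by blast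
  then have rate: "q_neg_rate > 0 \<and> (\<exists>z\<ge>0. \<forall>y\<ge>z. q y \<le> -q_neg_rate)"
    unfolding q_neg_rate_def by (rule someI_ex)
  then have "\<exists>z. z \<ge> 0 \<and> (\<forall>y\<ge>z. q y \<le> -q_neg_rate)" by blast
  then have "q_neg_level \<ge> 0 \<and> (\<forall>y\<ge>q_neg_level. q y \<le> -q_neg_rate)"
    unfolding q_neg_level_def by (rule someI_ex)
  then show "q_neg_level \<ge> 0" "\<And>z. z \<ge> q_neg_level \<Longrightarrow> q z \<le> -q_neg_rate" by auto
  show "q_neg_rate > 0" using rate by blast
qed

text \<open>Once \<open>W \<ge> w_level\<close> for a time \<open>h + 1/\<mu>\<close>, \<open>V\<close> exceeds \<open>q_neg_level + 1\<close>, so \<open>W\<close> decays.\<close>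

definition w_level where
  "w_level = max (SOME L. \<forall>y\<in>Uplus h. (\<forall>s\<in>{-h..0}. L \<le> fst y s) \<longrightarrow> \<mu> * (2 * q_neg_level + 2) \<le> j y) 1"

lemma w_level: "1 \<le> w_level"
  "\<And>y. y \<in> Uplus h \<Longrightarrow> (\<forall>s\<in>{-h..0}. w_level \<le> fst y s) \<Longrightarrow> \<mu> * (2 * q_neg_level + 2) \<le> j y"
proof -
  have "\<mu> * (2 * q_neg_level + 2) > 0" using mu q_neg_level(2) by simp
  then have "\<exists>L. \<forall>y\<in>Uplus h. (\<forall>s\<in>{-h..0}. L \<le> fst y s) \<longrightarrow> \<mu> * (2 * q_neg_level + 2) \<le> j y"
    using j_large by blast
  from someI_ex[OF this]
  show "\<And>y. y \<in> Uplus h \<Longrightarrow> (\<forall>s\<in>{-h..0}. w_level \<le> fst y s) \<Longrightarrow> \<mu> * (2 * q_neg_level + 2) \<le> j y"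
    unfolding w_level_def by force
qed (simp add: w_level_def)

definition w_bound where "w_bound = w_level * exp (q_max * (h + 1/\<mu>))"

lemma w_bound: "w_level \<le> w_bound" "0 < w_bound"
proof -
  have "1 \<le> exp (q_max * (h + 1/\<mu>))" using q_max(1) h mu by simp
  then show "w_level \<le> w_bound" unfolding w_bound_def using w_level(1)
    by (metis mult_left_mono mult.right_neutral order_trans zero_le_one)
  then show "0 < w_bound" using w_level(1) by simp
qed

lemma q_neg_after_W_large:
  assumes x: "x \<in> X" and t0: "0 \<le> t0" and large: "\<And>r. r \<in> {t0..s} \<Longrightarrow> w_level \<le> W x r"
    and r: "t0 + h + 1/\<mu> \<le> r" "r \<le> s"
  shows "q (V x r) \<le> - q_neg_rate"
proof -
  define K where "K = \<mu> * (2 * q_neg_level + 2)"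
  define E where "E = exp (-\<mu>*(r - (t0 + h)))"
  have "0 < 1/\<mu>" using mu by simp
  then have ah: "0 \<le> t0 + h" "t0 + h \<le> r" using t0 h r by linarith+
  have "K \<le> j (seg (W x) u, seg (V x) u)" if "t0 + h < u" "u < r" for u
    using w_level(2)[OF seg_sol_Uplus[OF x]] large that t0 h r
    unfolding K_def seg_def by (simp add: add_increasing2)
  then have A: "K/\<mu> + (V x (t0 + h) - K/\<mu>) * E \<le> V x r"
    unfolding E_def by (intro V_lower_linear[OF x ah]) auto
  have E: "E \<le> 1/2" "0 \<le> E"
  proof -
    have "1 \<le> \<mu> * (r - (t0 + h))" using r mu by (simp add: field_simps)
    then have "2 \<le> exp (\<mu> * (r - (t0 + h)))" using exp_ge_add_one_self[of "\<mu> * (r - (t0 + h))"] by linarith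
    moreover have "E * exp (\<mu> * (r - (t0 + h))) = 1" unfolding E_def by (simp add: exp_add[symmetric])
    moreover show "0 \<le> E" unfolding E_def by simp
    ultimately have "E * 2 \<le> 1" by (metis mult_left_mono)
    then show "E \<le> 1/2" by simp
  qed
  have "0 \<le> V x (t0 + h) * E" using V_nonneg[OF x] t0 h E(2) by simp
  moreover have "K/\<mu> * E \<le> K/\<mu> * (1/2)"
    using E(1) mu q_neg_level(2) unfolding K_def by (intro mult_left_mono) auto
  moreover have "(V x (t0 + h) - K/\<mu>) * E = V x (t0 + h) * E - K/\<mu> * E" by (rule left_diff_distrib)
  ultimately have "K/\<mu> - K/\<mu> * (1/2) \<le> V x r" using A by linarith
  moreover have "K/\<mu> - K/\<mu> * (1/2) = q_neg_level + 1" unfolding K_def using mu by (simp add: field_simps)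
  ultimately show ?thesis using q_neg_level(3) by simp
qed

lemma W_stays_below_w_bound:
  assumes x: "x \<in> X" and t0: "0 \<le> t0" "W x t0 \<le> w_level" and s: "t0 \<le> s"
  shows "W x s \<le> w_bound"
proof (rule ccontr)
  assume "\<not> W x s \<le> w_bound"
  then have big: "w_bound < W x s" by simp
  have cont: "continuous_on {t0..s} (W x)" by (rule continuous_on_subset[OF W_cont[OF x]]) (use t0 h in auto)
  have "w_level < W x s" using big w_bound(1) by simp
  then obtain c where c: "t0 \<le> c" "c < s" "W x c = w_level"
    and above: "\<And>r. c < r \<Longrightarrow> r \<le> s \<Longrightarrow> w_level < W x r"
    using last_level_crossing[OF s cont t0(2)] by metis
  have c0: "0 \<le> c" using c t0 by simp
  have large: "w_level \<le> W x r" if "r \<in> {c..s}" for r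
    using that c above[of r] by (cases "r = c") auto
  show False
  proof (cases "s - c < h + 1/\<mu>")
    case True
    have "W x s \<le> w_level * exp (q_max * (s - c))" using W_exp_q_max(2)[OF x c0, of s] c by simp
    also have "\<dots> \<le> w_bound" unfolding w_bound_def using True q_max(1) w_level(1) by simp
    finally show False using big by simp
  next
    case False
    define c' where "c' = c + h + 1/\<mu>"
    have c': "0 \<le> c'" "c \<le> c'" "c' \<le> s" unfolding c'_def using False c0 h mu by auto
    have "q (V x r) \<le> - q_neg_rate" if "r \<in> {c'..s}" for r
      by (rule q_neg_after_W_large[OF x c0 large]) (use that in \<open>auto simp: c'_def\<close>)
    then have "q (V x r) \<le> 0" if "r \<in> {c'..s}" for r using that q_neg_level(1) by force
    then have "W x s \<le> W x c' * exp (0 * (s - c'))" by (intro W_upper_exp[OF x c'(1,3)])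
    also have "\<dots> \<le> W x c * exp (q_max * (c' - c))" using W_exp_q_max(2)[OF x c0 c'(2)] by simp
    also have "\<dots> = w_bound" unfolding c'_def w_bound_def c(3) by (simp add: algebra_simps)
    finally show False using big by simp
  qed
qed

lemma W_reaches_w_level:
  assumes x: "x \<in> X"
  obtains T where "0 \<le> T" "W x T \<le> w_level"
proof (rule ccontr)
  assume none: "\<not> thesis"
  note reach = that
  have big: "w_level < W x r" if r: "0 \<le> r" for r
    using reach[OF r] none by force
  define T0 where "T0 = h + 1/\<mu>"
  define W0 where "W0 = W x T0"
  define d where "d = W0 / (w_level * q_neg_rate)"
  have T0: "0 \<le> T0" unfolding T0_def using h mu by (simp add: add_nonneg_nonneg)
  have W0: "0 < W0" unfolding W0_def using big[OF T0] w_level(1) by simp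
  have d: "0 < d" "q_neg_rate * d = W0 / w_level"
    unfolding d_def using W0 w_level(1) q_neg_level(1) by simp_all
  have large: "w_level \<le> W x r" if "r \<in> {0..T0 + d}" for r using big[of r] that by simp
  have "q (V x r) \<le> - q_neg_rate" if "r \<in> {T0..T0 + d}" for r
    using q_neg_after_W_large[OF x order.refl large, of r] that unfolding T0_def by simp
  then have "W x (T0 + d) \<le> W0 * exp (- q_neg_rate * (T0 + d - T0))"
    unfolding W0_def using d T0 by (intro W_upper_exp[OF x T0]) auto
  also have "\<dots> = W0 / exp (q_neg_rate * d)" by (simp add: exp_minus field_simps)
  also have "\<dots> \<le> W0 / (1 + W0 / w_level)"
    using exp_ge_add_one_self[of "q_neg_rate * d"] W0 w_level(1) d(2)
    by (intro divide_left_mono) (auto simp: add_pos_pos)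
  also have "\<dots> < w_level" using W0 w_level(1) by (simp add: field_simps)
  finally show False using big[of "T0 + d"] T0 d by simp
qed

lemma W_eventually_le_w_bound:
  assumes x: "x \<in> X"
  obtains T where "0 \<le> T" "\<And>s. T \<le> s \<Longrightarrow> W x s \<le> w_bound"
  using W_reaches_w_level[OF x] W_stays_below_w_bound[OF x] by metis

definition W_segments where
  "W_segments = {\<phi>. C1s h \<phi> \<and> (\<forall>s\<in>{-h..0}. 0 \<le> \<phi> s) \<and> norm1s h \<phi> \<le> w_bound + q_max * w_bound}"

definition j_bound where
  "j_bound = max (SOME J. \<forall>y\<in>W_segments \<times> {\<psi>. C1s h \<psi> \<and> (\<forall>s\<in>{-h..0}. 0 \<le> \<psi> s)}. j y \<le> J) 1"

lemma j_bound: "1 \<le> j_bound"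
  "\<And>\<phi> \<psi>. \<phi> \<in> W_segments \<Longrightarrow> C1s h \<psi> \<Longrightarrow> (\<forall>s\<in>{-h..0}. 0 \<le> \<psi> s) \<Longrightarrow> j (\<phi>, \<psi>) \<le> j_bound"
proof -
  define B2 where "B2 = {\<psi>. C1s h \<psi> \<and> (\<forall>s\<in>{-h..0}. 0 \<le> \<psi> s)}"
  have "W_segments \<times> B2 \<subseteq> Uplus h" "bounded1s h W_segments"
    unfolding W_segments_def B2_def Uplus_def bounded1s_def by auto
  then have "bounded (j ` (W_segments \<times> B2))" using j_bdd by blast
  then have "\<exists>J. \<forall>y\<in>W_segments \<times> B2. j y \<le> J"
    unfolding bounded_iff by (metis abs_le_D1 image_eqI real_norm_def)
  from someI_ex[OF this]
  show "\<And>\<phi> \<psi>. \<phi> \<in> W_segments \<Longrightarrow> C1s h \<psi> \<Longrightarrow> (\<forall>s\<in>{-h..0}. 0 \<le> \<psi> s) \<Longrightarrow> j (\<phi>, \<psi>) \<le> j_bound"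
    unfolding j_bound_def B2_def by fastforce
qed (simp add: j_bound_def)

definition v_bound where "v_bound = j_bound/\<mu> + 1"

lemma v_bound: "0 < v_bound"
  unfolding v_bound_def using j_bound(1) mu by (simp add: add_pos_nonneg)

lemma seg_W_in_W_segments:
  assumes x: "x \<in> X" and T: "0 \<le> T" "\<And>s. T \<le> s \<Longrightarrow> W x s \<le> w_bound" and t: "T + h \<le> t"
  shows "seg (W x) t \<in> W_segments"
proof -
  have t0: "0 \<le> t" using t T h by simp
  have W: "0 \<le> W x (t+s)" "W x (t+s) \<le> w_bound" if "s \<in> {-h..0}" for s
    using W_nonneg[OF x, of "t+s"] T(2)[of "t+s"] that t t0 by auto
  have "\<bar>der h (seg (W x) t) s\<bar> \<le> q_max * w_bound" if s: "s \<in> {-h..0}" for s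
  proof -
    have "der h (seg (W x) t) s = q (V x (t+s)) * W x (t+s)"
      using C1s_seg_sol(3)[OF x t0 s] der_from_W[OF x, of "t+s"] s t T h by simp
    then show ?thesis using abs_qV_le[OF x, of "t+s"] W[OF s] s t0
      by (simp add: abs_mult mult_mono q_max(1) less_imp_le)
  qed
  then have "norm1s h (seg (W x) t) \<le> w_bound + q_max * w_bound"
    unfolding norm1s_def using W h unfolding seg_def
    by (intro add_mono norm0s_le) (auto simp: seg_def)
  then show ?thesis unfolding W_segments_def using C1s_seg_sol(1)[OF x t0] W unfolding seg_def by auto
qed

lemma j_seg_sol_le_j_bound:
  assumes x: "x \<in> X" and T: "0 \<le> T" "\<And>s. T \<le> s \<Longrightarrow> W x s \<le> w_bound" and t: "T + h \<le> t"
  shows "j (seg (W x) t, seg (V x) t) \<le> j_bound"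
  using j_bound(2)[OF seg_W_in_W_segments[OF assms]] C1s_seg_sol(2)[OF x] V_nonneg[OF x] t T h
  unfolding seg_def by (auto simp: seg_def)

lemma sol_eventually_bounded:
  assumes x: "x \<in> X"
  obtains T where "0 \<le> T" "\<And>s. T \<le> s \<Longrightarrow> W x s \<le> w_bound \<and> V x s \<le> v_bound"
proof -
  obtain T where T: "0 \<le> T" "\<And>s. T \<le> s \<Longrightarrow> W x s \<le> w_bound"
    using W_eventually_le_w_bound[OF x] by blast
  define T1 v1 where "T1 = T + h" and "v1 = V x T1"
  have T1: "0 \<le> T1" and v1: "0 \<le> v1" unfolding T1_def v1_def using T h V_nonneg[OF x] by auto
  have T2: "T1 \<le> T1 + v1/\<mu>" using v1 mu by simp
  have "V x s \<le> v_bound" if s: "T1 + v1/\<mu> \<le> s" for s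
  proof -
    have s1: "T1 \<le> s" using s T2 by linarith
    have "V x s \<le> j_bound/\<mu> + (v1 - j_bound/\<mu>) * exp (-\<mu>*(s-T1))"
      unfolding v1_def using j_seg_sol_le_j_bound[OF x T] s1 T1
      by (intro V_upper_linear[OF x T1 s1]) (auto simp: T1_def)
    also have "\<dots> \<le> j_bound/\<mu> + v1 * exp (-\<mu>*(s-T1))"
      using j_bound(1) mu by (intro add_left_mono mult_right_mono) auto
    also have "v1 * exp (-\<mu>*(s-T1)) \<le> 1"
    proof -
      have "1 + v1 \<le> exp (\<mu>*(s-T1))"
        using exp_ge_add_one_self[of "\<mu>*(s-T1)"] s mu by (simp add: field_simps)
      then have "v1 / exp (\<mu>*(s-T1)) \<le> v1 / (1 + v1)" using v1 by (intro divide_left_mono) auto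
      also have "\<dots> \<le> 1" using v1 by simp
      finally have "v1 / exp (\<mu>*(s-T1)) \<le> 1" .
      moreover have "exp (-\<mu>*(s-T1)) = 1 / exp (\<mu>*(s-T1))" by (simp add: exp_minus inverse_eq_divide)
      ultimately show ?thesis by simp
    qed
    finally show ?thesis unfolding v_bound_def by simp
  qed
  moreover have "W x s \<le> w_bound" if "T1 + v1/\<mu> \<le> s" for s
    using T(2)[of s] that T2 h unfolding T1_def by simp
  ultimately show thesis using that[of "T1 + v1/\<mu>"] T1 T2 by simp
qed

subsection \<open>Uniform persistence\<close>

definition v_small where "v_small = (SOME z. z > 0 \<and> (\<forall>y\<in>{0..z}. q 0 / 2 \<le> q y))"

lemma v_small: "0 < v_small" "\<And>z. 0 \<le> z \<Longrightarrow> z \<le> v_small \<Longrightarrow> q 0 / 2 \<le> q z"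
proof -
  have "isCont q 0" using q_cont Rm continuous_on_eq_continuous_at[of "{Rm<..}" q] by auto
  then have "\<forall>\<^sub>F z in at 0. q 0 / 2 < q z" using q0 unfolding isCont_def by (intro order_tendstoD(1)) auto
  then obtain d where d: "d > 0" "\<And>z. z \<noteq> 0 \<Longrightarrow> dist z 0 < d \<Longrightarrow> q 0 / 2 < q z"
    unfolding eventually_at by blast
  have "\<forall>z\<in>{0..d/2}. q 0 / 2 \<le> q z"
  proof
    fix z assume z: "z \<in> {0..d/2}"
    show "q 0 / 2 \<le> q z"
    proof (cases "z = 0")
      case True then show ?thesis using q0 by simp
    next
      case False then show ?thesis using d(2)[of z] z d(1) by (auto simp: dist_real_def)
    qed
  qed
  then have "\<exists>z. z > 0 \<and> (\<forall>y\<in>{0..z}. q 0 / 2 \<le> q y)" using d(1) half_gt_zero by blast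
  then have "v_small > 0 \<and> (\<forall>y\<in>{0..v_small}. q 0 / 2 \<le> q y)" unfolding v_small_def by (rule someI_ex)
  then show "0 < v_small" "\<And>z. 0 \<le> z \<Longrightarrow> z \<le> v_small \<Longrightarrow> q 0 / 2 \<le> q z" by auto
qed

definition w_small where
  "w_small = (SOME \<delta>. \<delta> > 0 \<and> (\<forall>y\<in>Uplus h. norm0s h (fst y) \<le> \<delta> \<longrightarrow> j y \<le> \<mu> * v_small / 2))"

lemma w_small: "0 < w_small" "\<And>y. y \<in> Uplus h \<Longrightarrow> norm0s h (fst y) \<le> w_small \<Longrightarrow> j y \<le> \<mu> * v_small / 2"
proof -
  have "\<mu> * v_small / 2 > 0" using mu v_small(1) by simp
  then have "\<exists>\<delta>. \<delta> > 0 \<and> (\<forall>y\<in>Uplus h. norm0s h (fst y) \<le> \<delta> \<longrightarrow> j y \<le> \<mu> * v_small / 2)"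
    using j_small by blast
  then have "w_small > 0 \<and> (\<forall>y\<in>Uplus h. norm0s h (fst y) \<le> w_small \<longrightarrow> j y \<le> \<mu> * v_small / 2)"
    unfolding w_small_def by (rule someI_ex)
  then show "0 < w_small" "\<And>y. y \<in> Uplus h \<Longrightarrow> norm0s h (fst y) \<le> w_small \<Longrightarrow> j y \<le> \<mu> * v_small / 2"
    by auto
qed

text \<open>While \<open>W \<le> w_small\<close>, after this time \<open>V \<le> v_small\<close>, so that \<open>W\<close> grows at rate \<open>q 0 / 2\<close>.\<close>

definition settle_time where "settle_time = 2 * v_bound / (\<mu> * v_small)"

lemma settle_time_pos: "0 < settle_time"
  unfolding settle_time_def using v_bound v_small(1) mu by simp

definition w_persist where "w_persist = w_small * exp (- q_max * (h + settle_time))"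

lemma w_persist: "0 < w_persist" "w_persist \<le> w_small"
proof -
  have "exp (- q_max * (h + settle_time)) \<le> 1"
    using q_max(1) h settle_time_pos by simp
  then show "w_persist \<le> w_small" unfolding w_persist_def using w_small(1)
    by (metis mult_left_mono mult.right_neutral less_imp_le)
qed (simp add: w_persist_def w_small(1))

lemma V_le_v_small_if_W_small:
  assumes x: "x \<in> X" and TB: "0 \<le> TB" "\<And>s. TB \<le> s \<Longrightarrow> V x s \<le> v_bound"
    and a: "TB \<le> a" and r: "a + h + settle_time \<le> r" and small: "\<And>u. u \<in> {a..r} \<Longrightarrow> W x u \<le> w_small"
  shows "V x r \<le> v_small"
proof -
  have ah: "0 \<le> a + h" "a + h \<le> r"
    using a TB r h settle_time_pos by linarith+
  define E where "E = exp (-\<mu>*(r-(a+h)))"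
  have "j (seg (W x) u, seg (V x) u) \<le> \<mu> * v_small / 2" if u: "a + h < u" "u < r" for u
  proof (rule w_small(2)[OF seg_sol_Uplus[OF x]])
    show "norm0s h (fst (seg (W x) u, seg (V x) u)) \<le> w_small"
      using small W_nonneg[OF x] u a TB h unfolding seg_def by (intro norm0s_le) auto
  qed (use u ah in auto)
  then have "V x r \<le> (\<mu> * v_small / 2)/\<mu> + (V x (a+h) - (\<mu> * v_small / 2)/\<mu>) * E"
    unfolding E_def by (intro V_upper_linear[OF x ah]) auto
  also have "\<dots> \<le> v_small/2 + v_bound * E"
    using TB(2)[of "a+h"] a h v_small(1) mu unfolding E_def by (intro add_mono mult_right_mono) auto
  also have "v_bound * E \<le> v_small/2"
  proof -
    have "\<mu> * settle_time \<le> \<mu>*(r-(a+h))" using r mu by (intro mult_left_mono) auto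
    moreover have "\<mu> * settle_time = 2 * v_bound / v_small" unfolding settle_time_def using mu by simp
    ultimately have "2 * v_bound / v_small \<le> exp (\<mu>*(r-(a+h)))"
      using exp_ge_add_one_self[of "\<mu>*(r-(a+h))"] by linarith
    then have "v_bound / exp (\<mu>*(r-(a+h))) \<le> v_bound / (2 * v_bound / v_small)"
      using v_bound v_small(1) by (intro divide_left_mono) auto
    moreover have "E * exp (\<mu>*(r-(a+h))) = 1" unfolding E_def by (simp add: exp_add[symmetric])
    then have "v_bound * E = v_bound / exp (\<mu>*(r-(a+h)))" by (simp add: field_simps)
    moreover have "v_bound / (2 * v_bound / v_small) = v_small / 2" using v_bound by simp
    ultimately show ?thesis by linarith
  qed
  finally show ?thesis by simp
qed

lemma W_reaches_w_small:
  assumes x: "x \<in> X" and pos: "fst x 0 > 0" and TB: "0 \<le> TB" "\<And>s. TB \<le> s \<Longrightarrow> V x s \<le> v_bound"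
  obtains t where "TB \<le> t" "w_small \<le> W x t"
proof (rule ccontr)
  assume none: "\<not> thesis"
  note reach = that
  have small: "W x u < w_small" if u: "TB \<le> u" for u using reach[OF u] none by force
  define T2 where "T2 = TB + h + settle_time"
  have T2: "TB \<le> T2" "0 \<le> T2" unfolding T2_def using TB h settle_time_pos by auto
  have q: "q 0 / 2 \<le> q (V x r)" if r: "r \<in> {T2..T2 + d}" for r d
  proof (rule v_small(2))
    show "0 \<le> V x r" using V_nonneg[OF x, of r] r T2 h by simp
    have "W x u \<le> w_small" if "u \<in> {TB..r}" for u using small[of u] that by simp
    then show "V x r \<le> v_small"
      using r by (intro V_le_v_small_if_W_small[OF x TB order.refl]) (auto simp: T2_def)
  qed
  define w2 d where "w2 = W x T2" and "d = w_small / (q 0 / 2 * w2)"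
  have w2: "0 < w2" unfolding w2_def using W_pos[OF x pos] T2 by simp
  have d: "0 < d" "w2 * (1 + q 0 / 2 * d) = w2 + w_small"
    unfolding d_def using w_small(1) q0 w2 by (simp_all add: field_simps)
  have "w2 * exp (q 0 / 2 * (T2 + d - T2)) \<le> W x (T2 + d)"
    unfolding w2_def using q[of _ d] T2 d by (intro W_lower_exp[OF x]) auto
  moreover have "w2 * (1 + q 0 / 2 * d) \<le> w2 * exp (q 0 / 2 * d)"
    using exp_ge_add_one_self w2 by (intro mult_left_mono) auto
  ultimately have "w2 + w_small \<le> W x (T2 + d)" using d by simp
  then show False using small[of "T2 + d"] T2 d w2 by simp
qed

lemma W_stays_above_w_persist:
  assumes x: "x \<in> X" and TB: "0 \<le> TB" "\<And>s. TB \<le> s \<Longrightarrow> V x s \<le> v_bound"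
    and t0: "TB \<le> t0" "w_small \<le> W x t0" and s: "t0 \<le> s"
  shows "w_persist \<le> W x s"
proof (rule ccontr)
  assume "\<not> w_persist \<le> W x s"
  then have low: "W x s < w_persist" by simp
  have "continuous_on {t0..s} (\<lambda>u. - W x u)"
    by (intro continuous_on_minus continuous_on_subset[OF W_cont[OF x]]) (use t0 TB h in auto)
  moreover have "- W x s > - w_small" using low w_persist(2) by simp
  ultimately obtain c where c: "t0 \<le> c" "c < s" "- W x c = - w_small"
    and below: "\<And>r. c < r \<Longrightarrow> r \<le> s \<Longrightarrow> - w_small < - W x r"
    using last_level_crossing[OF s, of "\<lambda>u. - W x u" "- w_small"] t0(2) by (metis neg_le_iff_le)
  have c0: "0 \<le> c" using c t0 TB by simp
  show False
  proof (cases "s - c < h + settle_time")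
    case True
    have "w_small * exp (- q_max * (h + settle_time)) \<le> W x c * exp (- q_max * (s - c))"
      using True q_max(1) c w_small(1) by simp
    also have "\<dots> \<le> W x s" using W_exp_q_max(1)[OF x c0, of s] c by simp
    finally show False using low unfolding w_persist_def by simp
  next
    case False
    define c' where "c' = c + h + settle_time"
    have c': "0 \<le> c'" "c' \<le> s" "c \<le> c'" unfolding c'_def using False c0 h settle_time_pos by auto
    have "0 \<le> q (V x r)" if r: "r \<in> {c'..s}" for r
    proof -
      have "W x u \<le> w_small" if "u \<in> {c..r}" for u
        using that below[of u] c r by (cases "u = c") auto
      then have "V x r \<le> v_small"
        using r c t0 by (intro V_le_v_small_if_W_small[OF x TB, of c]) (auto simp: c'_def)
      moreover have "0 \<le> V x r" using V_nonneg[OF x, of r] r c' h by simp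
      ultimately show ?thesis using v_small(2)[of "V x r"] q0 by simp
    qed
    then have "W x c' * exp (0 * (s - c')) \<le> W x s" by (intro W_lower_exp[OF x c'(1,2)]) auto
    moreover have "W x c * exp (- q_max * (c' - c)) \<le> W x c'" using W_exp_q_max(1)[OF x c0 c'(3)] .
    ultimately show False using low c(3) unfolding w_persist_def c'_def by simp
  qed
qed

lemma W_eventually_ge_w_persist:
  assumes x: "x \<in> X" and pos: "fst x 0 > 0"
  obtains T where "0 \<le> T" "\<And>s. T \<le> s \<Longrightarrow> w_persist \<le> W x s \<and> W x s \<le> w_bound \<and> V x s \<le> v_bound"
proof -
  obtain TB where TB: "0 \<le> TB" "\<And>s. TB \<le> s \<Longrightarrow> W x s \<le> w_bound \<and> V x s \<le> v_bound"
    using sol_eventually_bounded[OF x] by blast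
  obtain t0 where "TB \<le> t0" "w_small \<le> W x t0"
    using W_reaches_w_small[OF x pos TB(1)] TB(2) by blast
  then show thesis using that[of t0] W_stays_above_w_persist[OF x TB(1) _ \<open>TB \<le> t0\<close>] TB by force
qed

definition v_window where "v_window = w_bound / (w_persist * (q 0 / 2)) + 1"

definition v_persist where "v_persist = v_small * exp (- \<mu> * v_window)"

lemma v_window_pos: "0 < v_window"
  unfolding v_window_def using w_bound(2) w_persist(1) q0 by (simp add: add_pos_nonneg)

lemma v_persist_pos: "0 < v_persist"
  unfolding v_persist_def using v_small(1) by simp

lemma V_reaches_v_small:
  assumes x: "x \<in> X" and T: "0 \<le> T" "\<And>s. T \<le> s \<Longrightarrow> w_persist \<le> W x s \<and> W x s \<le> w_bound"
    and t: "T + v_window \<le> t"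
  shows "\<exists>a\<in>{t - v_window..t}. v_small \<le> V x a"
proof (rule ccontr)
  assume none: "\<not> ?thesis"
  define D where "D = v_window"
  have D: "0 < D" unfolding D_def by (rule v_window_pos)
  have qa: "q 0 / 2 \<le> q (V x a)" if a: "a \<in> {t - D..t}" for a
  proof (rule v_small(2))
    show "0 \<le> V x a" using V_nonneg[OF x, of a] a T(1) t h unfolding D_def by simp
    have "\<forall>a\<in>{t - D..t}. V x a < v_small" using none unfolding D_def by (auto simp: not_le)
    then show "V x a \<le> v_small" using a by (simp add: less_imp_le)
  qed
  have "W x (t - D) * exp (q 0 / 2 * (t - (t - D))) \<le> W x t"
    by (rule W_lower_exp[OF x _ _ qa]) (use T(1) t D in \<open>auto simp: D_def\<close>)
  then have "W x (t - D) * exp (q 0 / 2 * D) \<le> W x t" by simp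
  moreover have "w_persist * (1 + q 0 / 2 * D) \<le> W x (t - D) * exp (q 0 / 2 * D)"
  proof (rule mult_mono)
    show "w_persist \<le> W x (t - D)" using T(2)[of "t - D"] t unfolding D_def by simp
    show "1 + q 0 / 2 * D \<le> exp (q 0 / 2 * D)" by (rule exp_ge_add_one_self)
    show "0 \<le> W x (t - D)" using W_nonneg[OF x, of "t - D"] T(1) t h unfolding D_def by simp
    show "0 \<le> 1 + q 0 / 2 * D" using q0 D by simp
  qed
  moreover have "w_persist * (1 + q 0 / 2 * D) = w_persist + w_bound + w_persist * (q 0 / 2)"
    unfolding D_def v_window_def using w_persist(1) q0 by (simp add: field_simps)
  moreover have "W x t \<le> w_bound" using T(2)[of t] t D unfolding D_def by simp
  moreover have "0 < w_persist * (q 0 / 2)" using w_persist(1) q0 by simp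
  ultimately show False using w_persist(1) by linarith
qed

lemma V_eventually_ge_v_persist:
  assumes x: "x \<in> X" and pos: "fst x 0 > 0"
  obtains T where "\<And>s. T \<le> s \<Longrightarrow> w_persist \<le> W x s \<and> v_persist \<le> V x s"
proof -
  obtain T where T: "0 \<le> T" "\<And>s. T \<le> s \<Longrightarrow> w_persist \<le> W x s \<and> W x s \<le> w_bound \<and> V x s \<le> v_bound"
    using W_eventually_ge_w_persist[OF x pos] by blast
  have "v_persist \<le> V x t" if t: "T + v_window \<le> t" for t
  proof -
    obtain a where a: "a \<in> {t - v_window..t}" "v_small \<le> V x a"
      using V_reaches_v_small[OF x T(1) _ t] T(2) by blast
    have "v_small * exp (- \<mu> * v_window) \<le> V x a * exp (-\<mu>*(t-a))"
      using a mu v_small(1) by (intro mult_mono) auto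
    also have "\<dots> \<le> V x t" using V_decay[OF x, of a t] a T(1) t v_window_pos by simp
    finally show ?thesis unfolding v_persist_def .
  qed
  then show thesis using that[of "T + v_window"] T v_window_pos by force
qed

lemma unif_persistent_rho1: "unif_persistent X (Sflow sol) rho1"
  unfolding unif_persistent_def
proof (intro exI[of _ "w_persist/2"] conjI ballI impI)
  show "0 < w_persist/2" using w_persist(1) by simp
  fix y assume y: "y \<in> X" "0 < rho1 y"
  obtain T where "0 \<le> T" and T: "\<And>s. T \<le> s \<Longrightarrow> w_persist \<le> W y s \<and> W y s \<le> w_bound \<and> V y s \<le> v_bound"
    using W_eventually_ge_w_persist[OF y(1)] y(2) unfolding rho1_def by blast
  have "\<forall>\<^sub>F t in at_top. w_persist \<le> rho1 (Sflow sol t y)"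
    unfolding rho1_def Sflow_def seg_def eventually_at_top_linorder using T by (intro exI[of _ T]) simp
  then show "ereal (w_persist/2) < Liminf at_top (\<lambda>t. ereal (rho1 (Sflow sol t y)))"
    by (rule Liminf_gt_if_eventually_ge) (use w_persist(1) in simp)
qed

lemma unif_persistent_rhom: "unif_persistent X (Sflow sol) rhom"
  unfolding unif_persistent_def
proof (intro exI[of _ "min w_persist v_persist / 2"] conjI ballI impI)
  show "0 < min w_persist v_persist / 2" using w_persist(1) v_persist_pos by simp
  fix y assume y: "y \<in> X" "0 < rhom y"
  obtain T where T: "\<And>s. T \<le> s \<Longrightarrow> w_persist \<le> W y s \<and> v_persist \<le> V y s"
    using V_eventually_ge_v_persist[OF y(1)] y(2) unfolding rhom_def by (metis min_less_iff_conj)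
  have "\<forall>\<^sub>F t in at_top. min w_persist v_persist \<le> rhom (Sflow sol t y)"
    unfolding rhom_def Sflow_def seg_def eventually_at_top_linorder using T
    by (intro exI[of _ T]) (auto intro: min.coboundedI1 min.coboundedI2)
  then show "ereal (min w_persist v_persist / 2) < Liminf at_top (\<lambda>t. ereal (rhom (Sflow sol t y)))"
    by (rule Liminf_gt_if_eventually_ge) (use w_persist(1) v_persist_pos in \<open>simp add: min_def\<close>)
qed

subsection \<open>A compact attracting set\<close>

definition regular_states :: "real \<Rightarrow> st set" where
  "regular_states K = {y \<in> X. regular h K (fst y) \<and> regular h K (snd y)}"

lemma bounded1_regular_states: "bounded1 h (regular_states K)"
  unfolding bounded1_def regular_states_def using regular_norm1 h by (intro exI[of _ "2*K"]) auto

lemma j_tendsto_if_d1_tendsto: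
  assumes y: "\<And>n. y n \<in> Uplus h" "\<And>n. regular h K (fst (y n))" "\<And>n. regular h K (snd (y n))"
    and l: "l \<in> Uplus h" "regular h K (fst l)" "regular h K (snd l)"
    and d1: "(\<lambda>n. d1 h (y n) l) \<longlonglongrightarrow> 0"
  shows "(\<lambda>n. j (y n)) \<longlonglongrightarrow> j l"
proof -
  let ?B = "{y \<in> Uplus h. regular h K (fst y) \<and> regular h K (snd y)}"
  have "?B \<subseteq> Uplus h \<and> bounded1 h ?B"
    unfolding bounded1_def using regular_norm1 h by (intro conjI exI[of _ "2*K"]) auto
  then obtain L where L: "0 \<le> L" "\<forall>y\<in>?B. \<forall>y'\<in>?B. \<bar>j y - j y'\<bar> \<le> L * norm0 h (psub y y')"
    using j_lip by blast
  have "norm (j (y n) - j l) \<le> L * d1 h (y n) l" for n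
  proof -
    have C: "C1s h (fst (y n))" "C1s h (fst l)" using y l unfolding regular_def by auto
    have "norm0 h (psub (y n) l) \<le> d1 h (y n) l"
      unfolding d1_def norm1_def using norm0s_nonneg[OF _ C1s_continuous_der[OF h]] C1s_diff[OF C] h
      by (simp add: norm0_def psub_def le_max_iff_disj)
    then have "L * norm0 h (psub (y n) l) \<le> L * d1 h (y n) l" using L(1) by (rule mult_left_mono)
    moreover have "\<bar>j (y n) - j l\<bar> \<le> L * norm0 h (psub (y n) l)" using L(2) y l by blast
    ultimately show ?thesis by simp
  qed
  then have "\<forall>\<^sub>F n in sequentially. norm (j (y n) - j l) \<le> L * d1 h (y n) l" by simp
  moreover have "(\<lambda>n. L * d1 h (y n) l) \<longlonglongrightarrow> 0" using tendsto_mult_right_zero[OF d1] .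
  ultimately have "(\<lambda>n. j (y n) - j l) \<longlonglongrightarrow> 0" by (rule Lim_null_comparison)
  then show ?thesis by (simp add: LIM_zero_iff)
qed

lemma regular_limit_in_X:
  assumes y: "\<And>n. y n \<in> regular_states K" and l: "regular h K (fst l)" "regular h K (snd l)"
    and u: "uniform_limit {-h..0} (\<lambda>n. fst (y n)) (fst l) sequentially"
      "uniform_limit {-h..0} (\<lambda>n. snd (y n)) (snd l) sequentially"
      "uniform_limit {-h..0} (\<lambda>n. der h (fst (y n))) (der h (fst l)) sequentially"
      "uniform_limit {-h..0} (\<lambda>n. der h (snd (y n))) (der h (snd l)) sequentially"
  shows "l \<in> X"
proof -
  have h0: "0 \<in> {-h..0}" using h by simp
  have yU: "y n \<in> Uplus h" "regular h K (fst (y n))" "regular h K (snd (y n))" for n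
    using y Xplus_subset_Uplus unfolding regular_states_def by auto
  have lU: "l \<in> Uplus h" using l unfolding regular_def Uplus_def by auto
  have "(\<lambda>n. d1 h (y n) l) \<longlonglongrightarrow> 0"
    using yU l u unfolding regular_def by (intro d1_tendsto_0_if_uniform_limit[OF h]) auto
  then have j: "(\<lambda>n. j (y n)) \<longlonglongrightarrow> j l" by (rule j_tendsto_if_d1_tendsto[OF yU lU l])
  have lim: "(\<lambda>n. fst (y n) 0) \<longlonglongrightarrow> fst l 0" "(\<lambda>n. snd (y n) 0) \<longlonglongrightarrow> snd l 0"
    "(\<lambda>n. der h (fst (y n)) 0) \<longlonglongrightarrow> der h (fst l) 0" "(\<lambda>n. der h (snd (y n)) 0) \<longlonglongrightarrow> der h (snd l) 0"
    using tendsto_uniform_limitI[OF _ h0] u by auto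
  have yX: "der h (fst (y n)) 0 = q (snd (y n) 0) * fst (y n) 0"
      "der h (snd (y n)) 0 = j (y n) - \<mu> * snd (y n) 0" for n
    using y unfolding regular_states_def Xplus_def Fmap_def by auto
  have "0 \<le> snd l 0" using l(2) h0 unfolding regular_def by blast
  then have "snd l 0 \<in> interior {Rm<..}" using Rm by (simp add: interior_open)
  then have "isCont q (snd l 0)" by (rule continuous_on_interior[OF q_cont])
  then have "(\<lambda>n. der h (fst (y n)) 0) \<longlonglongrightarrow> q (snd l 0) * fst l 0"
    unfolding yX by (intro tendsto_mult isCont_tendsto_compose[OF _ lim(2)] lim(1))
  moreover have "(\<lambda>n. der h (snd (y n)) 0) \<longlonglongrightarrow> j l - \<mu> * snd l 0"
    unfolding yX by (intro tendsto_intros j lim(2))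
  ultimately show ?thesis
    using lU LIMSEQ_unique[OF lim(3)] LIMSEQ_unique[OF lim(4)] unfolding Xplus_def Fmap_def by auto
qed

lemma compact1_regular_states: "compact1 h (regular_states K)"
  unfolding compact1_def
proof (intro allI impI)
  fix f :: "nat \<Rightarrow> st" assume f: "\<forall>n. f n \<in> regular_states K"
  then have reg: "regular h K (fst (f n))" "regular h K (snd (f n))" for n
    unfolding regular_states_def by auto
  obtain r1 g1 where r1: "strict_mono r1" and g1: "regular h K g1"
    and u1: "uniform_limit {-h..0} (\<lambda>n. fst (f (r1 n))) g1 sequentially"
      "uniform_limit {-h..0} (\<lambda>n. der h (fst (f (r1 n)))) (der h g1) sequentially"
    using regular_subseq[of h K "\<lambda>n. fst (f n)", OF h reg(1)] by blast
  obtain r2 g2 where r2: "strict_mono r2" and g2: "regular h K g2"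
    and u2: "uniform_limit {-h..0} (\<lambda>n. snd (f (r1 (r2 n)))) g2 sequentially"
      "uniform_limit {-h..0} (\<lambda>n. der h (snd (f (r1 (r2 n))))) (der h g2) sequentially"
    using regular_subseq[of h K "\<lambda>n. snd (f (r1 n))", OF h reg(2)] by blast
  define r l where "r = r1 \<circ> r2" and "l = (g1, g2)"
  have u: "uniform_limit {-h..0} (\<lambda>n. fst (f (r n))) (fst l) sequentially"
      "uniform_limit {-h..0} (\<lambda>n. snd (f (r n))) (snd l) sequentially"
      "uniform_limit {-h..0} (\<lambda>n. der h (fst (f (r n)))) (der h (fst l)) sequentially"
      "uniform_limit {-h..0} (\<lambda>n. der h (snd (f (r n)))) (der h (snd l)) sequentially"
    using uniform_limit_subseq[OF u1(1) r2] uniform_limit_subseq[OF u1(2) r2] u2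
    unfolding r_def l_def by simp_all
  have l: "regular h K (fst l)" "regular h K (snd l)" unfolding l_def using g1 g2 by simp_all
  have "l \<in> X" using regular_limit_in_X[OF _ l u] f by blast
  then have "l \<in> regular_states K" unfolding regular_states_def using l by simp
  moreover have "(\<lambda>n. d1 h (f (r n)) l) \<longlonglongrightarrow> 0"
    using reg l u unfolding regular_def by (intro d1_tendsto_0_if_uniform_limit[OF h]) auto
  moreover have "strict_mono r" unfolding r_def using strict_mono_o[OF r1 r2] .
  ultimately show "\<exists>l\<in>regular_states K. \<exists>r. strict_mono r \<and> (\<lambda>n. d1 h (f (r n)) l) \<longlonglongrightarrow> 0"
    by blast
qed

definition q_lip where
  "q_lip = (SOME L. 0 \<le> L \<and> (\<forall>a\<in>{0..v_bound}. \<forall>b\<in>{0..v_bound}. \<bar>q a - q b\<bar> \<le> L * \<bar>a - b\<bar>))"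

lemma q_lip: "0 \<le> q_lip" "\<And>a b. a \<in> {0..v_bound} \<Longrightarrow> b \<in> {0..v_bound} \<Longrightarrow> \<bar>q a - q b\<bar> \<le> q_lip * \<bar>a - b\<bar>"
proof -
  obtain D where D: "\<And>z. z \<in> {Rm<..} \<Longrightarrow> (q has_real_derivative D z) (at z)" "continuous_on {Rm<..} D"
    using q_C1 unfolding C1_differentiable_on_def has_real_derivative_iff_has_vector_derivative by blast
  have "bounded (D ` {0..v_bound})"
    using Rm by (intro compact_imp_bounded compact_continuous_image continuous_on_subset[OF D(2)]) auto
  then obtain M where "\<forall>y\<in>D ` {0..v_bound}. norm y \<le> M" unfolding bounded_iff by blast
  then have M: "\<And>z. z \<in> {0..v_bound} \<Longrightarrow> \<bar>D z\<bar> \<le> M" by auto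
  have "(q has_field_derivative D z) (at z within {0..v_bound})" if "z \<in> {0..v_bound}" for z
    by (rule has_field_derivative_at_within, rule D(1)) (use that Rm in auto)
  moreover have "norm (D z) \<le> max M 0" if "z \<in> {0..v_bound}" for z using M[OF that] by simp
  ultimately have "\<bar>q a - q b\<bar> \<le> max M 0 * \<bar>a - b\<bar>" if "a \<in> {0..v_bound}" "b \<in> {0..v_bound}" for a b
    using field_differentiable_bound[OF convex_real_interval(5), of 0 v_bound q D "max M 0" a b] that by simp
  then have "\<exists>L. 0 \<le> L \<and> (\<forall>a\<in>{0..v_bound}. \<forall>b\<in>{0..v_bound}. \<bar>q a - q b\<bar> \<le> L * \<bar>a - b\<bar>)"
    by (intro exI[of _ "max M 0"]) auto
  then have "0 \<le> q_lip \<and> (\<forall>a\<in>{0..v_bound}. \<forall>b\<in>{0..v_bound}. \<bar>q a - q b\<bar> \<le> q_lip * \<bar>a - b\<bar>)"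
    unfolding q_lip_def by (rule someI_ex)
  then show "0 \<le> q_lip" "\<And>a b. a \<in> {0..v_bound} \<Longrightarrow> b \<in> {0..v_bound} \<Longrightarrow> \<bar>q a - q b\<bar> \<le> q_lip * \<bar>a - b\<bar>"
    by auto
qed

definition w_rate where "w_rate = q_max * w_bound"
definition v_rate where "v_rate = j_bound + \<mu> * v_bound"

definition absorb_ball where
  "absorb_ball = {y \<in> Uplus h. norm1 h y \<le> max w_bound v_bound + max w_rate v_rate}"

definition j_lip_ball where
  "j_lip_ball = (SOME L. 0 \<le> L \<and> (\<forall>y\<in>absorb_ball. \<forall>y'\<in>absorb_ball. \<bar>j y - j y'\<bar> \<le> L * norm0 h (psub y y')))"

lemma j_lip_ball: "0 \<le> j_lip_ball"
  "\<And>y y'. y \<in> absorb_ball \<Longrightarrow> y' \<in> absorb_ball \<Longrightarrow> \<bar>j y - j y'\<bar> \<le> j_lip_ball * norm0 h (psub y y')"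
proof -
  have "absorb_ball \<subseteq> Uplus h \<and> bounded1 h absorb_ball" unfolding absorb_ball_def bounded1_def by blast
  then have "\<exists>L. 0 \<le> L \<and> (\<forall>y\<in>absorb_ball. \<forall>y'\<in>absorb_ball. \<bar>j y - j y'\<bar> \<le> L * norm0 h (psub y y'))"
    using j_lip by blast
  then have "0 \<le> j_lip_ball \<and> (\<forall>y\<in>absorb_ball. \<forall>y'\<in>absorb_ball. \<bar>j y - j y'\<bar> \<le> j_lip_ball * norm0 h (psub y y'))"
    unfolding j_lip_ball_def by (rule someI_ex)
  then show "0 \<le> j_lip_ball"
    "\<And>y y'. y \<in> absorb_ball \<Longrightarrow> y' \<in> absorb_ball \<Longrightarrow> \<bar>j y - j y'\<bar> \<le> j_lip_ball * norm0 h (psub y y')"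
    by auto
qed

definition dw_lip where "dw_lip = q_lip * v_rate * w_bound + q_max * w_rate"
definition dv_lip where "dv_lip = j_lip_ball * max w_rate v_rate + \<mu> * v_rate"

definition reg_bound where
  "reg_bound = Max {w_bound, v_bound, w_rate, v_rate, dw_lip, dv_lip, 1}"

lemma reg_bound: "0 < reg_bound" "w_bound \<le> reg_bound" "v_bound \<le> reg_bound"
  "w_rate \<le> reg_bound" "v_rate \<le> reg_bound" "dw_lip \<le> reg_bound" "dv_lip \<le> reg_bound"
  unfolding reg_bound_def by (simp_all add: le_max_iff_disj less_max_iff_disj)

lemma rates_nonneg: "0 \<le> w_rate" "0 \<le> v_rate"
  unfolding w_rate_def v_rate_def using q_max(1) w_bound(2) j_bound(1) mu v_bound by auto

text \<open>On a trajectory that has entered the bounds \<open>w_bound\<close>, \<open>v_bound\<close> at time \<open>T\<close>, the ODE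
  bounds the derivatives of \<open>W\<close>, \<open>V\<close> from time \<open>T + h\<close>, makes them Lipschitz from
  \<open>T + 2h\<close>, and so the segments are \<open>reg_bound\<close>-regular from \<open>T + 3h\<close>.\<close>

context
  fixes x T
  assumes x: "x \<in> X" and T: "0 \<le> T" and bounded: "\<And>s. T \<le> s \<Longrightarrow> W x s \<le> w_bound \<and> V x s \<le> v_bound"
begin

lemma sol_in_bounds: "T \<le> u \<Longrightarrow> 0 \<le> W x u \<and> W x u \<le> w_bound \<and> 0 \<le> V x u \<and> V x u \<le> v_bound"
  using W_nonneg[OF x, of u] V_nonneg[OF x, of u] bounded[of u] T h by auto

lemma der_from_sol_bounds:
  assumes u: "T + h \<le> u"
  shows "\<bar>der_from h (W x) u\<bar> \<le> w_rate" "\<bar>der_from h (V x) u\<bar> \<le> v_rate"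
proof -
  have u0: "0 \<le> u" "T \<le> u" using u T h by auto
  note b = sol_in_bounds[OF u0(2)]
  have "\<bar>q (V x u)\<bar> * \<bar>W x u\<bar> \<le> q_max * w_bound"
    using abs_qV_le[OF x, of u] u0 h b by (intro mult_mono) auto
  then show "\<bar>der_from h (W x) u\<bar> \<le> w_rate" unfolding der_from_W[OF x u0(1)] w_rate_def by (simp add: abs_mult)
  have "0 \<le> j (seg (W x) u, seg (V x) u)" "j (seg (W x) u, seg (V x) u) \<le> j_bound"
    using j_seg_sol_nonneg[OF x u0(1)] j_seg_sol_le_j_bound[OF x T _ u] bounded by auto
  moreover have "0 \<le> \<mu> * V x u" "\<mu> * V x u \<le> \<mu> * v_bound" using b mu by simp_all
  ultimately show "\<bar>der_from h (V x) u\<bar> \<le> v_rate"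
    unfolding der_from_V[OF x u0(1)] v_rate_def by (simp add: abs_le_iff)
qed

lemma sol_lipschitz:
  assumes a: "T + h \<le> a" and b: "T + h \<le> b"
  shows "\<bar>W x a - W x b\<bar> \<le> w_rate * \<bar>a - b\<bar>" "\<bar>V x a - V x b\<bar> \<le> v_rate * \<bar>a - b\<bar>"
proof -
  have u: "0 \<le> u" "T + h \<le> u" if "u \<in> {T+h..}" for u using that T h by auto
  have "(W x has_field_derivative der_from h (W x) u) (at u within {T+h..})"
    "(V x has_field_derivative der_from h (V x) u) (at u within {T+h..})" if "u \<in> {T+h..}" for u
    using has_field_derivative_at_within[OF W_deriv[OF x u(1)[OF that]]]
      has_field_derivative_at_within[OF V_deriv[OF x u(1)[OF that]]]
      der_from_W[OF x u(1)[OF that]] der_from_V[OF x u(1)[OF that]] by simp_all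
  moreover have "norm (der_from h (W x) u) \<le> w_rate" "norm (der_from h (V x) u) \<le> v_rate"
    if "u \<in> {T+h..}" for u using der_from_sol_bounds[OF u(2)[OF that]] by simp_all
  ultimately show "\<bar>W x a - W x b\<bar> \<le> w_rate * \<bar>a - b\<bar>" "\<bar>V x a - V x b\<bar> \<le> v_rate * \<bar>a - b\<bar>"
    using field_differentiable_bound[OF convex_real_interval(1), of "T + h" "W x" "der_from h (W x)" w_rate a b]
      field_differentiable_bound[OF convex_real_interval(1), of "T + h" "V x" "der_from h (V x)" v_rate a b] a b
    by simp_all
qed

lemma der_from_W_lipschitz:
  assumes a: "T + h \<le> a" and b: "T + h \<le> b"
  shows "\<bar>der_from h (W x) a - der_from h (W x) b\<bar> \<le> dw_lip * \<bar>a - b\<bar>"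
proof -
  have ab: "0 \<le> a" "0 \<le> b" "T \<le> a" "T \<le> b" using a b T h by auto
  have "der_from h (W x) a - der_from h (W x) b = (q (V x a) - q (V x b)) * W x a + q (V x b) * (W x a - W x b)"
    unfolding der_from_W[OF x ab(1)] der_from_W[OF x ab(2)] by (simp add: algebra_simps)
  also have "\<bar>\<dots>\<bar> \<le> \<bar>q (V x a) - q (V x b)\<bar> * \<bar>W x a\<bar> + \<bar>q (V x b)\<bar> * \<bar>W x a - W x b\<bar>"
    by (simp add: abs_mult[symmetric] abs_triangle_ineq)
  also have "\<dots> \<le> (q_lip * (v_rate * \<bar>a - b\<bar>)) * w_bound + q_max * (w_rate * \<bar>a - b\<bar>)"
  proof (intro add_mono mult_mono)
    have "\<bar>q (V x a) - q (V x b)\<bar> \<le> q_lip * \<bar>V x a - V x b\<bar>"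
      using q_lip(2)[of "V x a" "V x b"] sol_in_bounds[OF ab(3)] sol_in_bounds[OF ab(4)] by simp
    also have "\<dots> \<le> q_lip * (v_rate * \<bar>a - b\<bar>)" using sol_lipschitz(2)[OF a b] q_lip(1) by (rule mult_left_mono)
    finally show "\<bar>q (V x a) - q (V x b)\<bar> \<le> q_lip * (v_rate * \<bar>a - b\<bar>)" .
  qed (use sol_in_bounds[OF ab(3)] abs_qV_le[OF x, of b] ab h sol_lipschitz(1)[OF a b]
      q_lip(1) rates_nonneg q_max(1) in auto)
  also have "\<dots> = dw_lip * \<bar>a - b\<bar>" unfolding dw_lip_def by (simp add: algebra_simps)
  finally show ?thesis .
qed

lemma seg_sol_in_absorb_ball:
  assumes u: "T + 2*h \<le> u"
  shows "(seg (W x) u, seg (V x) u) \<in> absorb_ball"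
proof -
  have u0: "0 \<le> u" using u T h by simp
  have s: "T \<le> u + s" "T + h \<le> u + s" if "s \<in> {-h..0}" for s using that u h by auto
  have "norm1 h (seg (W x) u, seg (V x) u) \<le> max w_bound v_bound + max w_rate v_rate"
    using sol_in_bounds[OF s(1)] der_from_sol_bounds[OF s(2)] C1s_seg_sol(3,4)[OF x u0] h
    by (intro norm1_le) (auto simp: seg_def le_max_iff_disj)
  then show ?thesis unfolding absorb_ball_def using seg_sol_Uplus[OF x u0] by simp
qed

lemma der_from_V_lipschitz:
  assumes a: "T + 2*h \<le> a" and b: "T + 2*h \<le> b"
  shows "\<bar>der_from h (V x) a - der_from h (V x) b\<bar> \<le> dv_lip * \<bar>a - b\<bar>"
proof -
  have ab: "0 \<le> a" "0 \<le> b" "T + h \<le> a" "T + h \<le> b" using a b T h by auto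
  define ja jb where "ja = j (seg (W x) a, seg (V x) a)" and "jb = j (seg (W x) b, seg (V x) b)"
  have rates: "w_rate * \<bar>a - b\<bar> \<le> max w_rate v_rate * \<bar>a - b\<bar>"
    "v_rate * \<bar>a - b\<bar> \<le> max w_rate v_rate * \<bar>a - b\<bar>" by (simp_all add: mult_right_mono)
  have "norm0 h (psub (seg (W x) a, seg (V x) a) (seg (W x) b, seg (V x) b)) \<le> max w_rate v_rate * \<bar>a - b\<bar>"
  proof (intro norm0_le)
    fix s assume "s \<in> {-h..0}"
    then have "T + h \<le> a + s" "T + h \<le> b + s" using a b by auto
    from sol_lipschitz[OF this] rates
    show "\<bar>fst (psub (seg (W x) a, seg (V x) a) (seg (W x) b, seg (V x) b)) s\<bar> \<le> max w_rate v_rate * \<bar>a - b\<bar>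
      \<and> \<bar>snd (psub (seg (W x) a, seg (V x) a) (seg (W x) b, seg (V x) b)) s\<bar> \<le> max w_rate v_rate * \<bar>a - b\<bar>"
      unfolding psub_def seg_def by simp
  qed (use h in simp)
  then have "j_lip_ball * norm0 h (psub (seg (W x) a, seg (V x) a) (seg (W x) b, seg (V x) b))
      \<le> j_lip_ball * (max w_rate v_rate * \<bar>a - b\<bar>)" using j_lip_ball(1) by (rule mult_left_mono)
  then have "\<bar>ja - jb\<bar> \<le> j_lip_ball * (max w_rate v_rate * \<bar>a - b\<bar>)"
    using j_lip_ball(2)[OF seg_sol_in_absorb_ball[OF a] seg_sol_in_absorb_ball[OF b]]
    unfolding ja_def jb_def by linarith
  moreover have "\<mu> * \<bar>V x a - V x b\<bar> \<le> \<mu> * (v_rate * \<bar>a - b\<bar>)"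
    using sol_lipschitz(2)[OF ab(3,4)] mu by simp
  moreover have "\<bar>der_from h (V x) a - der_from h (V x) b\<bar> \<le> \<bar>ja - jb\<bar> + \<mu> * \<bar>V x a - V x b\<bar>"
  proof -
    have "der_from h (V x) a - der_from h (V x) b = (ja - jb) - \<mu> * (V x a - V x b)"
      unfolding der_from_V[OF x ab(1)] der_from_V[OF x ab(2)] ja_def jb_def by (simp add: algebra_simps)
    then show ?thesis using abs_triangle_ineq4[of "ja - jb" "\<mu> * (V x a - V x b)"] mu by (simp add: abs_mult)
  qed
  ultimately have "\<bar>der_from h (V x) a - der_from h (V x) b\<bar>
      \<le> j_lip_ball * (max w_rate v_rate * \<bar>a - b\<bar>) + \<mu> * (v_rate * \<bar>a - b\<bar>)" by linarith
  also have "\<dots> = dv_lip * \<bar>a - b\<bar>" unfolding dv_lip_def by (simp add: algebra_simps)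
  finally show ?thesis .
qed

lemma regular_seg_sol:
  assumes t0: "0 \<le> t" and f: "f = W x \<or> f = V x" and C: "C1s h (seg f t)"
    and der: "\<And>s. s \<in> {-h..0} \<Longrightarrow> der h (seg f t) s = der_from h f (t+s)"
    and bnd: "\<And>s. s \<in> {-h..0} \<Longrightarrow> \<bar>der_from h f (t+s)\<bar> \<le> reg_bound"
    and lip: "\<And>s s'. s \<in> {-h..0} \<Longrightarrow> s' \<in> {-h..0} \<Longrightarrow>
      \<bar>der_from h f (t+s) - der_from h f (t+s')\<bar> \<le> reg_bound * \<bar>s - s'\<bar>"
    and tT: "T + h \<le> t"
  shows "regular h reg_bound (seg f t)"
  unfolding regular_def
proof (intro conjI ballI C)
  fix s s' assume s: "s \<in> {-h..0}" and s': "s' \<in> {-h..0}"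
  show "\<bar>der h (seg f t) s - der h (seg f t) s'\<bar> \<le> reg_bound * \<bar>s - s'\<bar>"
    using lip[OF s s'] der[OF s] der[OF s'] by simp
next
  fix s assume s: "s \<in> {-h..0}"
  have "T \<le> t + s" using s tT by auto
  then show "0 \<le> seg f t s" "seg f t s \<le> reg_bound"
    using sol_in_bounds[of "t + s"] f reg_bound unfolding seg_def by auto
  show "\<bar>der h (seg f t) s\<bar> \<le> reg_bound" using bnd[OF s] der[OF s] by simp
qed

lemma seg_sol_regular:
  assumes t: "T + 3*h \<le> t"
  shows "Sflow sol t x \<in> regular_states reg_bound"
proof -
  have t0: "0 \<le> t" using t T h by simp
  have s: "T + h \<le> t + s" "T + 2*h \<le> t + s" if "s \<in> {-h..0}" for s
    using that t h by auto
  have "regular h reg_bound (seg (W x) t)"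
  proof (rule regular_seg_sol[OF t0 _ C1s_seg_sol(1,3)[OF x t0]])
    show "\<bar>der_from h (W x) (t+s)\<bar> \<le> reg_bound" if "s \<in> {-h..0}" for s
      using der_from_sol_bounds(1)[OF s(1)[OF that]] reg_bound(4) by linarith
    show "\<bar>der_from h (W x) (t+s) - der_from h (W x) (t+s')\<bar> \<le> reg_bound * \<bar>s - s'\<bar>"
      if "s \<in> {-h..0}" "s' \<in> {-h..0}" for s s'
      using der_from_W_lipschitz[OF s(1)[OF that(1)] s(1)[OF that(2)]] reg_bound(6)
        mult_right_mono[of dw_lip reg_bound "\<bar>s - s'\<bar>"] by simp
  qed (use t h in auto)
  moreover have "regular h reg_bound (seg (V x) t)"
  proof (rule regular_seg_sol[OF t0 _ C1s_seg_sol(2,4)[OF x t0]])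
    show "\<bar>der_from h (V x) (t+s)\<bar> \<le> reg_bound" if "s \<in> {-h..0}" for s
      using der_from_sol_bounds(2)[OF s(1)[OF that]] reg_bound(5) by linarith
    show "\<bar>der_from h (V x) (t+s) - der_from h (V x) (t+s')\<bar> \<le> reg_bound * \<bar>s - s'\<bar>"
      if "s \<in> {-h..0}" "s' \<in> {-h..0}" for s s'
      using der_from_V_lipschitz[OF s(2)[OF that(1)] s(2)[OF that(2)]] reg_bound(7)
        mult_right_mono[of dv_lip reg_bound "\<bar>s - s'\<bar>"] by simp
  qed (use t h in auto)
  ultimately show ?thesis
    unfolding regular_states_def using Sflow_in_X[OF x t0] unfolding Sflow_def by simp
qed

end

lemma Sflow_eventually_regular:
  assumes x: "x \<in> X"
  shows "\<forall>\<^sub>F t in at_top. Sflow sol t x \<in> regular_states reg_bound"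
proof -
  obtain T where "0 \<le> T" "\<And>s. T \<le> s \<Longrightarrow> W x s \<le> w_bound \<and> V x s \<le> v_bound"
    using sol_eventually_bounded[OF x] by blast
  then show ?thesis
    using seg_sol_regular[OF x] unfolding eventually_at_top_linorder by blast
qed

lemma regular_states_attracts:
  assumes x: "x \<in> X"
  shows "((\<lambda>t. setdist1 h (Sflow sol t x) (regular_states reg_bound)) \<longlongrightarrow> 0) at_top"
  using Sflow_eventually_regular[OF x]
  by (intro tendsto_eventually, elim eventually_mono, intro setdist1_eq_0_if_mem[OF h])
    (auto simp: regular_states_def regular_def)

lemma zero_in_regular_states: "((\<lambda>s. 0), (\<lambda>s. 0)) \<in> regular_states reg_bound"
proof -
  have U: "((\<lambda>s. 0), (\<lambda>s. 0)) \<in> Uplus h" unfolding Uplus_def by (simp add: C1s_const)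
  then have "j ((\<lambda>s. 0), (\<lambda>s. 0)) = 0" by (rule j_eq_0_if_fst_0) simp
  then show ?thesis
    using U reg_bound(1) der_const[OF h] h
    unfolding regular_states_def regular_def Xplus_def Fmap_def by (simp add: C1s_const)
qed

subsection \<open>Equilibria\<close>

lemma continuous_on_j_const:
  assumes z: "0 \<le> z"
  shows "continuous_on {0..A} (\<lambda>a. j ((\<lambda>_. a), (\<lambda>_. z)))"
proof -
  define S where "S = (\<lambda>a. ((\<lambda>_::real. a), (\<lambda>_::real. z))) ` {0..A}"
  have S: "S \<subseteq> Uplus h" unfolding S_def Uplus_def using z by (auto simp: C1s_const)
  have norm0: "norm0 h ((\<lambda>_. a), (\<lambda>_. b)) = max \<bar>a\<bar> \<bar>b\<bar>" for a b
    unfolding norm0_def using h by (simp add: norm0s_const)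
  have "bounded1 h S"
    unfolding bounded1_def S_def norm1_def using h z
    by (intro exI[of _ "A + z"]) (auto simp: norm0_def norm0s_const norm0s_der_const)
  then obtain L where L: "\<forall>y\<in>S. \<forall>y'\<in>S. \<bar>j y - j y'\<bar> \<le> L * norm0 h (psub y y')" "0 \<le> L"
    using j_lip S by blast
  have "\<bar>j ((\<lambda>_. a), (\<lambda>_. z)) - j ((\<lambda>_. b), (\<lambda>_. z))\<bar> \<le> L * \<bar>a - b\<bar>"
    if "a \<in> {0..A}" "b \<in> {0..A}" for a b
  proof -
    have "psub ((\<lambda>_. a), (\<lambda>_. z)) ((\<lambda>_. b), (\<lambda>_. z)) = ((\<lambda>_. a - b), (\<lambda>_. 0))"
      unfolding psub_def by simp
    then have "norm0 h (psub ((\<lambda>_. a), (\<lambda>_. z)) ((\<lambda>_. b), (\<lambda>_. z))) = \<bar>a - b\<bar>" by (simp add: norm0)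
    moreover have "((\<lambda>_. a), (\<lambda>_. z)) \<in> S" "((\<lambda>_. b), (\<lambda>_. z)) \<in> S" unfolding S_def using that by auto
    then have "\<bar>j ((\<lambda>_. a), (\<lambda>_. z)) - j ((\<lambda>_. b), (\<lambda>_. z))\<bar>
        \<le> L * norm0 h (psub ((\<lambda>_. a), (\<lambda>_. z)) ((\<lambda>_. b), (\<lambda>_. z)))" using L(1) by blast
    ultimately show ?thesis by simp
  qed
  then show ?thesis
    using L(2) by (intro lipschitz_on_continuous_on[of L]) (auto simp: lipschitz_on_def dist_real_def)
qed

lemma equilibrium_if_q_zero:
  assumes z: "0 < z" "q z = 0"
  obtains a where "0 < a" "Fmap q j \<mu> ((\<lambda>_. a), (\<lambda>_. z)) = (0, 0)"
proof -
  define \<phi> where "\<phi> a = j ((\<lambda>_::real. a), (\<lambda>_::real. z))" for a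
  have "\<mu> * z + 1 > 0" using mu z by (simp add: add_pos_nonneg)
  then obtain L where L: "\<forall>y\<in>Uplus h. (\<forall>s\<in>{-h..0}. L \<le> fst y s) \<longrightarrow> \<mu> * z + 1 \<le> j y"
    using j_large by blast
  define A where "A = max L 1"
  have U: "((\<lambda>_. a), (\<lambda>_. z)) \<in> Uplus h" if "0 \<le> a" for a
    unfolding Uplus_def using that z by (simp add: C1s_const)
  have "\<phi> 0 = 0" unfolding \<phi>_def by (rule j_eq_0_if_fst_0[OF U]) simp_all
  moreover have "\<mu> * z + 1 \<le> \<phi> A" unfolding \<phi>_def A_def using L U[of "max L 1"] by simp
  moreover have "continuous_on {0..A} \<phi>" unfolding \<phi>_def using continuous_on_j_const z by simp
  ultimately obtain a where a: "0 \<le> a" "a \<le> A" "\<phi> a = \<mu> * z"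
    using IVT'[of \<phi> 0 "\<mu> * z" A] mu z unfolding A_def by fastforce
  moreover have "a \<noteq> 0" using a \<open>\<phi> 0 = 0\<close> mu z by auto
  ultimately show thesis using that[of a] z unfolding \<phi>_def Fmap_def by simp
qed

lemma q_has_positive_zero: obtains z where "0 < z" "q z = 0"
proof -
  have "continuous_on {0..q_neg_level + 1} q"
    using Rm q_neg_level(2) by (intro continuous_on_subset[OF q_cont]) auto
  moreover have "q (q_neg_level + 1) \<le> 0" using q_neg_level(3)[of "q_neg_level + 1"] q_neg_level(1) by simp
  ultimately obtain z where "0 \<le> z" "z \<le> q_neg_level + 1" "q z = 0"
    using IVT2'[where f = q and a = 0 and b = "q_neg_level + 1" and y = 0] q0 q_neg_level(2) by auto
  moreover have "z \<noteq> 0" using calculation q0 by auto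
  ultimately show thesis using that[of z] by simp
qed

end

theorem theorem6:
  fixes h Rm \<mu> :: real and q :: "real \<Rightarrow> real" and j :: "st \<Rightarrow> real" and sol :: "st \<Rightarrow> st"
  assumes h: "h > 0" and Rm: "Rm < 0" and mu: "\<mu> > 0"
    and j_fun: "\<forall>x\<in>Uset h Rm. \<forall>y\<in>Uset h Rm. (\<forall>s\<in>{-h..0}. fst x s = fst y s \<and> snd x s = snd y s) \<longrightarrow> j x = j y"
    and j_C1: "\<exists>Dj :: st \<Rightarrow> st \<Rightarrow> real.
        (\<forall>x\<in>Uset h Rm. \<forall>a b. \<forall>c. Cont h a \<and> Cont h b \<longrightarrow>
            Dj x (padd a b) = Dj x a + Dj x b \<and> Dj x (pscale c a) = c * Dj x a)
      \<and> (\<forall>x\<in>Uset h Rm. \<forall>\<epsilon>>0. \<exists>\<delta>>0. \<forall>y. C1s h (fst y) \<and> C1s h (snd y) \<and> norm1 h y < \<delta>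
            \<and> padd x y \<in> Uset h Rm \<longrightarrow> \<bar>j (padd x y) - j x - Dj x y\<bar> \<le> \<epsilon> * norm1 h y)
      \<and> (\<forall>x\<in>Uset h Rm. \<forall>\<epsilon>>0. \<exists>\<delta>>0. \<forall>x'\<in>Uset h Rm. d1 h x' x < \<delta> \<longrightarrow>
            (\<forall>y. C1s h (fst y) \<and> C1s h (snd y) \<longrightarrow> \<bar>Dj x' y - Dj x y\<bar> \<le> \<epsilon> * norm1 h y))
      \<and> (\<forall>x\<in>Uset h Rm. \<forall>y. Cont h y \<longrightarrow> (\<forall>\<epsilon>>0. \<exists>\<delta>>0. \<forall>x'\<in>Uset h Rm. \<forall>y'. Cont h y' \<and>
            d1 h x' x < \<delta> \<and> norm0 h (psub y' y) < \<delta> \<longrightarrow> \<bar>Dj x' y' - Dj x y\<bar> < \<epsilon>))"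
    and j_lip: "\<forall>B. B \<subseteq> Uplus h \<and> bounded1 h B \<longrightarrow>
        (\<exists>L\<ge>0. \<forall>x\<in>B. \<forall>y\<in>B. \<bar>j x - j y\<bar> \<le> L * norm0 h (psub x y))"
    and j_nonneg: "\<forall>x\<in>Uplus h. j x \<ge> 0"
    and j_bdd: "\<forall>B1 B2. B1 \<times> B2 \<subseteq> Uplus h \<and> bounded1s h B1 \<longrightarrow> bounded (j ` (B1 \<times> B2))"
    and q_bdd: "bounded (q ` {Rm<..})"
    and q_C1: "q C1_differentiable_on {Rm<..}"
    and j_small: "\<forall>\<epsilon>>0. \<exists>\<delta>>0. \<forall>x\<in>Uplus h. norm0s h (fst x) \<le> \<delta> \<longrightarrow> j x \<le> \<epsilon>"
    and q0: "q 0 > 0"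
    and q_neg: "\<exists>\<delta>>0. \<exists>zs\<ge>0. \<forall>z\<ge>zs. q z \<le> -\<delta>"
    and j_large: "\<forall>K>0. \<exists>L. \<forall>x\<in>Uplus h. (\<forall>s\<in>{-h..0}. fst x s \<ge> L) \<longrightarrow> j x \<ge> K"
    and sol_ex: "\<forall>x\<in>Xplus h q j \<mu>. is_sol h Rm q j \<mu> x (fst (sol x)) (snd (sol x))"
    and sol_uniq: "\<forall>x\<in>Xplus h q j \<mu>. \<forall>w v. is_sol h Rm q j \<mu> x w v \<longrightarrow>
        (\<forall>t\<ge>-h. w t = fst (sol x) t \<and> v t = snd (sol x) t)"
    and sol_cont: "\<forall>t0\<ge>0. \<forall>x0\<in>Xplus h q j \<mu>. \<forall>\<epsilon>>0. \<exists>\<delta>>0. \<forall>t\<ge>0. \<forall>x\<in>Xplus h q j \<mu>.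
        \<bar>t - t0\<bar> < \<delta> \<and> d1 h x x0 < \<delta> \<longrightarrow> d1 h (Sflow sol t x) (Sflow sol t0 x0) < \<epsilon>"
  shows "unif_persistent (Xplus h q j \<mu>) (Sflow sol) rho1
       \<and> unif_persistent (Xplus h q j \<mu>) (Sflow sol) rhom
       \<and> (\<exists>B. B \<noteq> {} \<and> B \<subseteq> Xplus h q j \<mu> \<and> compact1 h B \<and>
            (\<forall>x\<in>Xplus h q j \<mu>. ((\<lambda>t. setdist1 h (Sflow sol t x) B) \<longlongrightarrow> 0) at_top))
       \<and> point_dissipative h (Xplus h q j \<mu>) (Sflow sol)
       \<and> (\<exists>a>0. \<exists>b>0. Fmap q j \<mu> ((\<lambda>_. a), (\<lambda>_. b)) = (0, 0))
       \<and> (\<forall>z>0. q z = 0 \<longrightarrow> (\<exists>a>0. Fmap q j \<mu> ((\<lambda>_. a), (\<lambda>_. z)) = (0, 0)))"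
proof -
  obtain Dj where Dj: "\<forall>x\<in>Uset h Rm. \<forall>a b. \<forall>c. Cont h a \<and> Cont h b \<longrightarrow>
          Dj x (padd a b) = Dj x a + Dj x b \<and> Dj x (pscale c a) = c * Dj x a"
      "\<forall>x\<in>Uset h Rm. \<forall>\<epsilon>>0. \<exists>\<delta>>0. \<forall>y. C1s h (fst y) \<and> C1s h (snd y) \<and> norm1 h y < \<delta>
          \<and> padd x y \<in> Uset h Rm \<longrightarrow> \<bar>j (padd x y) - j x - Dj x y\<bar> \<le> \<epsilon> * norm1 h y"
      "\<forall>x\<in>Uset h Rm. \<forall>\<epsilon>>0. \<exists>\<delta>>0. \<forall>x'\<in>Uset h Rm. d1 h x' x < \<delta> \<longrightarrow>
          (\<forall>y. C1s h (fst y) \<and> C1s h (snd y) \<longrightarrow> \<bar>Dj x' y - Dj x y\<bar> \<le> \<epsilon> * norm1 h y)"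
    using j_C1 by blast
  interpret delay_system h Rm \<mu> q j Dj sol
    by unfold_locales (fact h Rm mu Dj j_lip j_nonneg j_bdd q_bdd q_C1 j_small q0 q_neg j_large sol_ex sol_cont)+
  have B: "regular_states reg_bound \<subseteq> X" unfolding regular_states_def by blast
  show ?thesis
  proof (intro conjI)
    show "unif_persistent X (Sflow sol) rho1" by (rule unif_persistent_rho1)
    show "unif_persistent X (Sflow sol) rhom" by (rule unif_persistent_rhom)
    show "\<exists>B. B \<noteq> {} \<and> B \<subseteq> X \<and> compact1 h B \<and> (\<forall>x\<in>X. ((\<lambda>t. setdist1 h (Sflow sol t x) B) \<longlongrightarrow> 0) at_top)"
      using B zero_in_regular_states compact1_regular_states regular_states_attracts by blast
    show "point_dissipative h X (Sflow sol)"
      unfolding point_dissipative_def using B bounded1_regular_states regular_states_attracts by blast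
    show "\<forall>z>0. q z = 0 \<longrightarrow> (\<exists>a>0. Fmap q j \<mu> ((\<lambda>_. a), (\<lambda>_. z)) = (0, 0))"
      using equilibrium_if_q_zero by metis
    then show "\<exists>a>0. \<exists>b>0. Fmap q j \<mu> ((\<lambda>_. a), (\<lambda>_. b)) = (0, 0)"
      using q_has_positive_zero by metis
  qed
qed

end
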